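(* Let $A$ be a finite alphabet and let $X\subseteq A^{\mathbb{Z}}$ be a transitive subshift of finite type. Let $F\colon X\to X$ be a cellular automaton on $X$ such that the dynamical system $(X,F)$ has at least one equicontinuity point. Then $F$ is onto ($F(X)=X$) if and only if the set of $F$-periodic points (points $x\in X$ with $F^n(x)=x$ for some $n\ge 1$) is dense in $X$.
   Context: $A^{\mathbb{Z}}$ carries the product topology, given by the metric $d(x,y)=2^{-i}$ with $i=\min\{|j| : x_j\neq y_j\}$, and the shift $\sigma((x_i)_{i})=(x_{i+1})_i$. A subshift is a closed $\sigma$-invariant subset $X\subseteq A^{\mathbb{Z}}$; $L(X)$ is the set of finite words occurring as blocks of consecutive coordinates of points of $X$. $X$ is transitive if for all $u,v\in L(X)$ there is $w$ with $uwv\in L(X)$; it is of finite type if it is the set of all sequences avoiding a finite set of forbidden words. A cellular automaton on $X$ is a continuous map $F\colon X\to X$ with $F\circ\sigma=\sigma\circ F$. A point $x\in X$ is an equicontinuity point of $(X,F)$ if for every $\varepsilon>0$ there is $\eta>0$ such that $d(x,y)\le\eta$, $y\in X$, implies $d(F^i(x),F^i(y))\le\varepsilon$ for all integers $i>0$. *)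

theory Defs
  imports "HOL-Analysis.Analysis"
begin

definition cdist :: "(int \<Rightarrow> 'a) \<Rightarrow> (int \<Rightarrow> 'a) \<Rightarrow> real" where
  "cdist x y = (if x = y then 0
     else (1/2) ^ (LEAST n::nat. \<exists>j. nat \<bar>j\<bar> = n \<and> x j \<noteq> y j))"

definition shift :: "(int \<Rightarrow> 'a) \<Rightarrow> (int \<Rightarrow> 'a)" where
  "shift x = (\<lambda>i. x (i + 1))"

definition occurs_at :: "'a list \<Rightarrow> (int \<Rightarrow> 'a) \<Rightarrow> int \<Rightarrow> bool" where
  "occurs_at w x i \<longleftrightarrow> w = map (\<lambda>k. x (i + int k)) [0..<length w]"

definition language :: "(int \<Rightarrow> 'a) set \<Rightarrow> 'a list set" where
  "language X = {w. \<exists>x\<in>X. \<exists>i. occurs_at w x i}"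

definition cclosed :: "(int \<Rightarrow> 'a) set \<Rightarrow> bool" where
  "cclosed X \<longleftrightarrow> (\<forall>x. (\<forall>e>0. \<exists>y\<in>X. cdist x y < e) \<longrightarrow> x \<in> X)"

definition subshift :: "(int \<Rightarrow> 'a) set \<Rightarrow> bool" where
  "subshift X \<longleftrightarrow> cclosed X \<and> shift ` X = X"

definition transitive_subshift :: "(int \<Rightarrow> 'a) set \<Rightarrow> bool" where
  "transitive_subshift X \<longleftrightarrow> subshift X \<and>
     (\<forall>u\<in>language X. \<forall>v\<in>language X. \<exists>w. u @ w @ v \<in> language X)"

definition SFT :: "(int \<Rightarrow> 'a) set \<Rightarrow> bool" where
  "SFT X \<longleftrightarrow> (\<exists>Fb :: 'a list set. finite Fb \<and>
     X = {x. \<forall>w\<in>Fb. \<forall>i. \<not> occurs_at w x i})"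

definition ccontinuous_on :: "(int \<Rightarrow> 'a) set \<Rightarrow> ((int \<Rightarrow> 'a) \<Rightarrow> (int \<Rightarrow> 'a)) \<Rightarrow> bool" where
  "ccontinuous_on X F \<longleftrightarrow> (\<forall>x\<in>X. \<forall>e>0. \<exists>d>0. \<forall>y\<in>X. cdist x y < d \<longrightarrow> cdist (F x) (F y) < e)"

definition cellular_automaton :: "(int \<Rightarrow> 'a) set \<Rightarrow> ((int \<Rightarrow> 'a) \<Rightarrow> (int \<Rightarrow> 'a)) \<Rightarrow> bool" where
  "cellular_automaton X F \<longleftrightarrow> F ` X \<subseteq> X \<and> ccontinuous_on X F \<and>
     (\<forall>x\<in>X. F (shift x) = shift (F x))"

definition equicontinuity_point :: "(int \<Rightarrow> 'a) set \<Rightarrow> ((int \<Rightarrow> 'a) \<Rightarrow> (int \<Rightarrow> 'a)) \<Rightarrow> (int \<Rightarrow> 'a) \<Rightarrow> bool" where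
  "equicontinuity_point X F x \<longleftrightarrow> x \<in> X \<and>
     (\<forall>e>0. \<exists>\<eta>>0. \<forall>y\<in>X. cdist x y \<le> \<eta> \<longrightarrow>
        (\<forall>i::nat. i > 0 \<longrightarrow> cdist ((F ^^ i) x) ((F ^^ i) y) \<le> e))"

definition periodic_points :: "(int \<Rightarrow> 'a) set \<Rightarrow> ((int \<Rightarrow> 'a) \<Rightarrow> (int \<Rightarrow> 'a)) \<Rightarrow> (int \<Rightarrow> 'a) set" where
  "periodic_points X F = {x\<in>X. \<exists>n::nat. n \<ge> 1 \<and> (F ^^ n) x = x}"

definition cdense_in :: "(int \<Rightarrow> 'a) set \<Rightarrow> (int \<Rightarrow> 'a) set \<Rightarrow> bool" where
  "cdense_in P X \<longleftrightarrow> P \<subseteq> X \<and> (\<forall>x\<in>X. \<forall>e>0. \<exists>y\<in>P. cdist x y < e)"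

end

theory Submission
  imports Defs "HOL-Library.Diagonal_Subsequence"
begin


lemma cdist_less_half_power_iff:
  "cdist x y < (1/2) ^ n \<longleftrightarrow> (\<forall>j. nat \<bar>j\<bar> \<le> n \<longrightarrow> x j = y j)"
proof (cases "x = y")
  case True
  then show ?thesis by (simp add: cdist_def)
next
  case False
  then obtain j0 where j0: "x j0 \<noteq> y j0" by auto
  define k where "k = (LEAST n::nat. \<exists>j. nat \<bar>j\<bar> = n \<and> x j \<noteq> y j)"
  have ex: "\<exists>j. nat \<bar>j\<bar> = k \<and> x j \<noteq> y j"
    unfolding k_def by (rule LeastI[of _ "nat \<bar>j0\<bar>"]) (use j0 in auto)
  have below: "x j = y j" if "nat \<bar>j\<bar> < k" for j
    using that not_less_Least unfolding k_def by blast
  have d: "cdist x y = (1/2) ^ k" using False by (simp add: cdist_def k_def)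
  have "(1/2::real) ^ k < (1/2) ^ n \<longleftrightarrow> n < k"
    by (rule power_strict_decreasing_iff) simp_all
  moreover have "n < k \<longleftrightarrow> (\<forall>j. nat \<bar>j\<bar> \<le> n \<longrightarrow> x j = y j)"
  proof
    show "\<forall>j. nat \<bar>j\<bar> \<le> n \<longrightarrow> x j = y j" if "n < k" using below that by auto
    show "n < k" if agree: "\<forall>j. nat \<bar>j\<bar> \<le> n \<longrightarrow> x j = y j"
    proof (rule ccontr)
      assume "\<not> n < k"
      then show False using ex agree by auto
    qed
  qed
  ultimately show ?thesis using d by simp
qed

lemma cdist_le_half_power_Suc_iff:
  "cdist x y \<le> (1/2) ^ Suc n \<longleftrightarrow> (\<forall>j. nat \<bar>j\<bar> \<le> n \<longrightarrow> x j = y j)"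
proof (cases "x = y")
  case True
  then show ?thesis by (simp add: cdist_def)
next
  case False
  define k where "k = (LEAST n::nat. \<exists>j. nat \<bar>j\<bar> = n \<and> x j \<noteq> y j)"
  have d: "cdist x y = (1/2) ^ k" using False by (simp add: cdist_def k_def)
  have le: "(1/2::real) ^ k \<le> (1/2) ^ Suc n \<longleftrightarrow> Suc n \<le> k"
    by (rule power_decreasing_iff) simp_all
  have less: "(1/2::real) ^ k < (1/2) ^ n \<longleftrightarrow> n < k"
    by (rule power_strict_decreasing_iff) simp_all
  show ?thesis
    unfolding cdist_less_half_power_iff[of x y n, symmetric] by (simp only: d le less Suc_le_eq)
qed

lemma ex_half_power_less: "0 < (e::real) \<Longrightarrow> \<exists>n. (1/2) ^ n < e"
  by (simp add: real_arch_pow_inv)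

definition shift_by :: "int \<Rightarrow> (int \<Rightarrow> 'a) \<Rightarrow> (int \<Rightarrow> 'a)" where
  "shift_by c x = (\<lambda>i. x (i + c))"

lemma shift_by_apply: "shift_by c x i = x (i + c)"
  by (simp add: shift_by_def)

lemma shift_by_shift_by [simp]: "shift_by a (shift_by b x) = shift_by (a + b) x"
  by (simp add: shift_by_def algebra_simps)

lemma shift_by_0 [simp]: "shift_by 0 x = x"
  by (simp add: shift_by_def)

lemma shift_eq_shift_by_1: "shift = shift_by 1"
  by (simp add: fun_eq_iff shift_def shift_by_def)

definition window :: "(int \<Rightarrow> 'a) \<Rightarrow> int \<Rightarrow> nat \<Rightarrow> 'a list" where
  "window x a n = map (\<lambda>k. x (a + int k)) [0..<n]"

lemma length_window [simp]: "length (window x a n) = n"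
  by (simp add: window_def)

lemma nth_window [simp]: "k < n \<Longrightarrow> window x a n ! k = x (a + int k)"
  by (simp add: window_def)

lemma occurs_at_iff_nth: "occurs_at w x i \<longleftrightarrow> (\<forall>k<length w. x (i + int k) = w ! k)"
  unfolding occurs_at_def list_eq_iff_nth_eq by auto

lemma occurs_at_iff_window: "occurs_at w x a \<longleftrightarrow> w = window x a (length w)"
  by (simp add: occurs_at_def window_def)

lemma occurs_at_window: "occurs_at (window x a n) x a"
  by (simp add: occurs_at_iff_nth)

lemma occurs_at_append:
  "occurs_at (u @ v) x i \<longleftrightarrow> occurs_at u x i \<and> occurs_at v x (i + int (length u))"
  unfolding occurs_at_iff_nth
proof safe
  fix k assume h: "\<forall>k<length (u @ v). x (i + int k) = (u @ v) ! k"
  show "x (i + int k) = u ! k" if "k < length u"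
    using h[rule_format, of k] that by (simp add: nth_append)
  show "x (i + int (length u) + int k) = v ! k" if "k < length v"
    using h[rule_format, of "length u + k"] that by (simp add: nth_append add.assoc)
next
  fix k
  assume hu: "\<forall>k<length u. x (i + int k) = u ! k"
    and hv: "\<forall>k<length v. x (i + int (length u) + int k) = v ! k"
    and k: "k < length (u @ v)"
  show "x (i + int k) = (u @ v) ! k"
  proof (cases "k < length u")
    case True
    then show ?thesis using hu by (simp add: nth_append)
  next
    case False
    then have "k - length u < length v" using k by simp
    then have "x (i + int (length u) + int (k - length u)) = v ! (k - length u)" using hv by blast
    then show ?thesis using False by (simp add: nth_append of_nat_diff algebra_simps)
  qed
qed

lemma occurs_at_shift_by: "occurs_at w (shift_by c x) i \<longleftrightarrow> occurs_at w x (i + c)"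
  unfolding occurs_at_iff_nth by (simp add: shift_by_apply algebra_simps)

lemma occurs_at_cong:
  "(\<And>k. k < length w \<Longrightarrow> x (i + int k) = y (i + int k)) \<Longrightarrow> occurs_at w x i \<longleftrightarrow> occurs_at w y i"
  unfolding occurs_at_iff_nth by auto

lemma occurs_at_agree:
  assumes "occurs_at w x i" "occurs_at w y i" "i \<le> j" "j < i + int (length w)"
  shows "x j = y j"
proof -
  define k where "k = nat (j - i)"
  have k: "k < length w" "j = i + int k" using assms(3,4) unfolding k_def by linarith+
  then have "x (i + int k) = w ! k" "y (i + int k) = w ! k"
    using assms(1,2) unfolding occurs_at_iff_nth by blast+
  then show ?thesis using k(2) by simp
qed

lemma finite_bounded_choice:
  assumes "finite S" "\<forall>a\<in>S. \<exists>g::'b list. P a g"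
  obtains G where "\<forall>a\<in>S. \<exists>g. P a g \<and> length g \<le> G"
proof -
  obtain f where f: "\<forall>a\<in>S. P a (f a)" using bchoice[OF assms(2)] by blast
  then have "\<forall>a\<in>S. P a (f a) \<and> length (f a) \<le> Max ((\<lambda>a. length (f a)) ` S)"
    using assms(1) by auto
  then show ?thesis using that by blast
qed

lemma periodic_eq_mod:
  assumes periodic: "\<And>j. z (j + int K) = z j"
  shows "z j = z (j mod int K)"
proof -
  have "z (r + int K * q) = z r" for r q
  proof (induction q rule: int_induct[where k = 0])
    case (step1 q)
    have "z (r + int K * (q + 1)) = z ((r + int K * q) + int K)" by (simp add: algebra_simps)
    then show ?case using step1 periodic by simp
  next
    case (step2 q)
    have "z (r + int K * q) = z ((r + int K * (q - 1)) + int K)" by (simp add: algebra_simps)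
    then show ?case using step2 periodic by simp
  qed simp
  then have "z (j mod int K + int K * (j div int K)) = z (j mod int K)" .
  then show ?thesis by simp
qed

lemma finite_periodic_configurations:
  assumes "0 < K"
  shows "finite {z :: int \<Rightarrow> 'a::finite. \<forall>j. z (j + int K) = z j}"
proof (rule inj_on_finite)
  let ?S = "{z :: int \<Rightarrow> 'a. \<forall>j. z (j + int K) = z j}"
  show "inj_on (\<lambda>z. window z 0 K) ?S"
  proof (rule inj_onI, rule ext)
    fix z z' j assume z: "z \<in> ?S" and z': "z' \<in> ?S" and eq: "window z 0 K = window z' 0 K"
    define k where "k = nat (j mod int K)"
    have k: "k < K" "int k = j mod int K" using assms unfolding k_def by (simp_all add: nat_less_iff)
    have "z (int k) = z' (int k)" using arg_cong[OF eq, of "\<lambda>w. w ! k"] k(1) by simp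
    then show "z j = z' j" using periodic_eq_mod[of z K j] periodic_eq_mod[of z' K j] z z' k(2) by simp
  qed
  show "(\<lambda>z. window z 0 K) ` ?S \<subseteq> {w. set w \<subseteq> UNIV \<and> length w = K}" by auto
  show "finite {w. set w \<subseteq> (UNIV :: 'a set) \<and> length w = K}"
    by (rule finite_lists_length_eq) simp
qed

lemma finite_orbit_eventually_periodic:
  assumes "finite S" "\<And>n. (f ^^ n) z \<in> S"
  obtains Q where "1 \<le> Q" "(f ^^ Q) ((f ^^ card S) z) = (f ^^ card S) z"
proof -
  have "\<not> inj_on (\<lambda>k. (f ^^ k) z) {..card S}"
  proof
    assume "inj_on (\<lambda>k. (f ^^ k) z) {..card S}"
    then have "card {..card S} \<le> card S" using card_inj_on_le assms by blast
    then show False by simp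
  qed
  then obtain i j where ij: "i \<le> card S" "j \<le> card S" "i \<noteq> j" "(f ^^ i) z = (f ^^ j) z"
    unfolding inj_on_def by auto
  define a b where "a = min i j" and "b = max i j"
  have ab: "a < b" "b \<le> card S" "(f ^^ a) z = (f ^^ b) z"
    using ij by (auto simp: a_def b_def min_def max_def)
  have "(f ^^ (b - a)) ((f ^^ card S) z) = (f ^^ ((b - a) + card S)) z"
    by (simp add: funpow_add)
  also have "(b - a) + card S = (card S - a) + b" using ab by simp
  also have "(f ^^ ((card S - a) + b)) z = (f ^^ (card S - a)) ((f ^^ a) z)"
    using ab(3) by (simp add: funpow_add)
  also have "\<dots> = (f ^^ ((card S - a) + a)) z" by (simp add: funpow_add)
  also have "(card S - a) + a = card S" using ab by simp
  finally show ?thesis using ab that[of "b - a"] by simp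
qed

lemma funpow_periodic_if_inj_on:
  assumes "finite S" and orbit: "\<And>n. (f ^^ n) z \<in> S" and inj: "inj_on f S"
  obtains Q where "1 \<le> Q" "(f ^^ Q) z = z"
proof -
  obtain Q where Q: "1 \<le> Q" "(f ^^ Q) ((f ^^ card S) z) = (f ^^ card S) z"
    using finite_orbit_eventually_periodic[OF assms(1) orbit] by blast
  have cancel: "(f ^^ n) ((f ^^ Q) z) = (f ^^ n) z \<Longrightarrow> (f ^^ Q) z = z" for n
  proof (induction n)
    case (Suc n)
    have mem: "(f ^^ n) ((f ^^ Q) z) \<in> S" using orbit[of "n + Q"] by (simp add: funpow_add)
    have "f ((f ^^ n) ((f ^^ Q) z)) = f ((f ^^ n) z)" using Suc.prems by simp
    then have "(f ^^ n) ((f ^^ Q) z) = (f ^^ n) z" by (rule inj_onD[OF inj _ mem orbit[of n]])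
    then show ?case by (rule Suc.IH)
  qed simp
  have "(f ^^ card S) ((f ^^ Q) z) = (f ^^ (card S + Q)) z" by (simp add: funpow_add)
  also have "\<dots> = (f ^^ (Q + card S)) z" by (simp add: add.commute)
  also have "\<dots> = (f ^^ card S) z" using Q(2) by (simp add: funpow_add)
  finally have "(f ^^ Q) z = z" by (rule cancel)
  then show ?thesis using Q(1) that by blast
qed

lemma cclosed_sequentially_compact:
  fixes s :: "nat \<Rightarrow> int \<Rightarrow> 'a::finite"
  assumes closed: "cclosed X" and s: "\<And>n. s n \<in> X"
  obtains r :: "nat \<Rightarrow> nat" and x where "strict_mono r" "x \<in> X"
    "\<And>N. \<exists>K. \<forall>k\<ge>K. \<forall>j. nat \<bar>j\<bar> \<le> N \<longrightarrow> s (r k) j = x j"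
proof -
  define P where "P = (\<lambda>n (r::nat \<Rightarrow> nat). \<forall>k j. nat \<bar>j\<bar> \<le> n \<longrightarrow> s (r k) j = s (r 0) j)"
  interpret ss: subseqs P
  proof
    fix n and r :: "nat \<Rightarrow> nat"
    define g where "g = (\<lambda>k. window (s (r k)) (- int n) (2 * n + 1))"
    have "range g \<subseteq> {w. set w \<subseteq> UNIV \<and> length w = 2 * n + 1}" by (auto simp: g_def)
    moreover have "finite {w. set w \<subseteq> (UNIV :: 'a set) \<and> length w = 2 * n + 1}"
      by (rule finite_lists_length_eq) simp
    ultimately have "finite (range g)" by (rule finite_subset)
    then obtain k0 where "\<not> finite {k \<in> UNIV. g k = g k0}"
      using pigeonhole_infinite[OF infinite_UNIV_nat] by blast
    then obtain r' :: "nat \<Rightarrow> nat" where r': "strict_mono r'" "\<forall>k. r' k \<in> {k \<in> UNIV. g k = g k0}"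
      using infinite_enumerate by blast
    have "P n (r \<circ> r')"
      unfolding P_def
    proof (intro allI impI)
      fix k j assume j: "nat \<bar>j\<bar> \<le> n"
      define t where "t = nat (j + int n)"
      have t: "t < 2 * n + 1" "- int n + int t = j" using j by (auto simp: t_def)
      have "g (r' k) ! t = g (r' 0) ! t" using r'(2) by simp
      then show "s ((r \<circ> r') k) j = s ((r \<circ> r') 0) j" using t by (simp add: g_def)
    qed
    then show "\<exists>r'. strict_mono r' \<and> P n (r \<circ> r')" using r'(1) by blast
  qed
  define d where "d = ss.diagseq"
  have holds: "P n (d \<circ> (+) (Suc n))" for n
    unfolding d_def
  proof (rule ss.diagseq_holds)
    fix r r' :: "nat \<Rightarrow> nat" and n assume "P n r"
    then show "P n (r \<circ> r')"
      unfolding P_def comp_def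
    proof (intro allI impI)
      fix k j assume "\<forall>k j. nat \<bar>j\<bar> \<le> n \<longrightarrow> s (r k) j = s (r 0) j" and "nat \<bar>j\<bar> \<le> n"
      then have "s (r (r' k)) j = s (r 0) j" "s (r (r' 0)) j = s (r 0) j" by blast+
      then show "s (r (r' k)) j = s (r (r' 0)) j" by simp
    qed
  qed
  define x where "x = (\<lambda>j. s (d (Suc (nat \<bar>j\<bar>))) j)"
  have conv: "s (d k) j = x j" if le: "Suc (nat \<bar>j\<bar>) \<le> k" for k j
  proof -
    obtain k' where k': "k = Suc (nat \<bar>j\<bar>) + k'" using le_Suc_ex[OF le] by blast
    have "s ((d \<circ> (+) (Suc (nat \<bar>j\<bar>))) k') j = s ((d \<circ> (+) (Suc (nat \<bar>j\<bar>))) 0) j"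
      using holds[of "nat \<bar>j\<bar>"] unfolding P_def by blast
    then show ?thesis by (simp add: k' x_def)
  qed
  have "\<forall>e>0. \<exists>y\<in>X. cdist x y < e"
  proof (intro allI impI)
    fix e :: real assume "0 < e"
    then obtain N where N: "(1/2) ^ N < e" using ex_half_power_less by blast
    have "cdist x (s (d (Suc N))) < (1/2) ^ N"
      unfolding cdist_less_half_power_iff using conv by simp
    then have "cdist x (s (d (Suc N))) < e" using N by linarith
    then show "\<exists>y\<in>X. cdist x y < e" using s by blast
  qed
  then have "x \<in> X" using closed unfolding cclosed_def by blast
  have "strict_mono d" unfolding d_def by (rule ss.subseq_diagseq)
  moreover note \<open>x \<in> X\<close>
  moreover have "\<exists>K. \<forall>k\<ge>K. \<forall>j. nat \<bar>j\<bar> \<le> N \<longrightarrow> s (d k) j = x j" for N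
    using conv by (intro exI[of _ "Suc N"]) auto
  ultimately show ?thesis by (rule that)
qed

definition factor_at :: "'a list \<Rightarrow> 'a list \<Rightarrow> nat \<Rightarrow> bool" where
  "factor_at u w k \<longleftrightarrow> k + length u \<le> length w \<and> (\<forall>t<length u. w ! (k + t) = u ! t)"

lemma first_factor_at_bounds:
  assumes v: "factor_at u v j" and w: "\<not> (\<exists>k. factor_at u w k)"
    and "i \<le> length w" and prefix: "\<forall>k<i. v ! k = w ! k"
  shows "(LEAST k. factor_at u v k) \<le> j" "i < (LEAST k. factor_at u v k) + length u"
proof -
  show "(LEAST k. factor_at u v k) \<le> j" using v by (rule Least_le)
  define f where "f = (LEAST k. factor_at u v k)"
  have "factor_at u v f" unfolding f_def using v by (rule LeastI)
  show "i < f + length u" unfolding f_def[symmetric]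
  proof (rule ccontr)
    assume "\<not> i < f + length u"
    then have "factor_at u w f"
      using \<open>factor_at u v f\<close> prefix \<open>i \<le> length w\<close> unfolding factor_at_def by force
    then show False using w by blast
  qed
qed

definition replace :: "(int \<Rightarrow> 'a) \<Rightarrow> int \<Rightarrow> 'a list \<Rightarrow> (int \<Rightarrow> 'a)" where
  "replace x a v = (\<lambda>j. if a \<le> j \<and> j < a + int (length v) then v ! nat (j - a) else x j)"

lemma occurs_at_replace: "occurs_at v (replace x a v) a"
  by (simp add: occurs_at_iff_nth replace_def)

lemma factor_at_split: "factor_at v w k \<Longrightarrow> w = take k w @ v @ drop (k + length v) w"
  unfolding factor_at_def
  by (intro nth_equalityI) (auto simp: nth_append min_def not_less intro!: arg_cong[where f = "(!) w"])

lemma window_replace: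
  assumes "k + length v \<le> n"
  shows "window (replace x (int k) v) 0 n = take k (window x 0 n) @ v @ drop (k + length v) (window x 0 n)"
proof (rule nth_equalityI)
  show "length (window (replace x (int k) v) 0 n) = length (take k (window x 0 n) @ v @ drop (k + length v) (window x 0 n))"
    using assms by simp
next
  fix j assume "j < length (window (replace x (int k) v) 0 n)"
  then have j: "j < n" by simp
  show "window (replace x (int k) v) 0 n ! j = (take k (window x 0 n) @ v @ drop (k + length v) (window x 0 n)) ! j"
  proof (cases "j < k")
    case True
    then show ?thesis using j assms by (simp add: replace_def nth_append)
  next
    case False
    then show ?thesis using j assms by (auto simp: replace_def nth_append nat_diff_distrib)
  qed
qed

lemma lex_replace_factor:
  assumes "(v', v) \<in> lex R" "length v' = length v"
  shows "(p @ v' @ s, p @ v @ s) \<in> lex R"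
  using lex_append_leftI[OF lex_append_rightI[OF assms(1)]] by simp

lemma ex_total_wf_order: "\<exists>R :: ('a::countable \<times> 'a) set. wf R \<and> total R"
proof (intro exI conjI)
  show "wf (inv_image less_than to_nat)" by (simp add: wf_less_than)
  show "total (inv_image less_than (to_nat :: 'a \<Rightarrow> nat))"
    by (rule total_inv_image[OF inj_to_nat total_less_than])
qed

lemma factor_at_window:
  assumes "factor_at w (window x a n) k"
  shows "occurs_at w x (a + int k)"
  unfolding occurs_at_iff_nth
proof (intro allI impI)
  fix t assume "t < length w"
  then have "k + t < n" "window x a n ! (k + t) = w ! t" using assms unfolding factor_at_def by auto
  then show "x (a + int k + int t) = w ! t" by (simp add: add.assoc)
qed

lemma periodic_add_multiple:
  assumes "\<And>j. z (j + int K) = z j" "K dvd P"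
  shows "z (j + int P) = z j"
proof -
  obtain q where "P = K * q" using assms(2) by blast
  then have "(j + int P) mod int K = j mod int K" by simp
  then show ?thesis using periodic_eq_mod[of z K] assms(1) by metis
qed

locale transitive_sft =
  fixes X :: "(int \<Rightarrow> 'a::finite) set"
  assumes transitive: "transitive_subshift X" and finite_type: "SFT X"
begin

definition forbidden :: "'a list set" where
  "forbidden = (SOME B. finite B \<and> X = {x. \<forall>w\<in>B. \<forall>i. \<not> occurs_at w x i})"

lemma finite_forbidden: "finite forbidden"
  and X_eq_avoiding_forbidden: "X = {x. \<forall>w\<in>forbidden. \<forall>i. \<not> occurs_at w x i}"
proof -
  have "\<exists>B. finite B \<and> X = {x. \<forall>w\<in>B. \<forall>i. \<not> occurs_at w x i}"
    using finite_type unfolding SFT_def by blast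
  from someI_ex[OF this] show "finite forbidden" "X = {x. \<forall>w\<in>forbidden. \<forall>i. \<not> occurs_at w x i}"
    unfolding forbidden_def by auto
qed

definition memory :: nat where
  "memory = Max (insert 1 (length ` forbidden))"

lemma memory_pos: "0 < memory"
proof -
  have "1 \<le> memory" unfolding memory_def by (rule Max_ge) (simp_all add: finite_forbidden)
  then show ?thesis by simp
qed

lemma length_forbidden_le_memory: "w \<in> forbidden \<Longrightarrow> length w \<le> memory"
  unfolding memory_def using finite_forbidden by simp

lemma mem_if_windows_mem:
  assumes "\<And>i. \<exists>x\<in>X. \<forall>k<memory. x (i + int k) = z (i + int k)"
  shows "z \<in> X"
proof -
  have "\<not> occurs_at w z i" if w: "w \<in> forbidden" for w i
  proof
    assume occ: "occurs_at w z i"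
    obtain x where x: "x \<in> X" "\<forall>k<memory. x (i + int k) = z (i + int k)" using assms by blast
    have "occurs_at w x i"
      using occ x(2) length_forbidden_le_memory[OF w] by (auto simp: occurs_at_iff_nth)
    then show False using x(1) w X_eq_avoiding_forbidden by blast
  qed
  then show ?thesis using X_eq_avoiding_forbidden by blast
qed

lemma glue_mem:
  assumes "x \<in> X" "y \<in> X" "\<And>j. a \<le> j \<Longrightarrow> j < a + int memory \<Longrightarrow> x j = y j"
  shows "(\<lambda>j. if j < a then x j else y j) \<in> X"
proof (rule mem_if_windows_mem)
  fix i
  show "\<exists>u\<in>X. \<forall>k<memory. u (i + int k) = (if i + int k < a then x (i + int k) else y (i + int k))"
  proof (cases "i < a")
    case True
    then show ?thesis using assms by (intro bexI[of _ x]) auto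
  next
    case False
    then show ?thesis using assms by (intro bexI[of _ y]) auto
  qed
qed

lemma glue_mem_at_common_word:
  assumes "x \<in> X" "y \<in> X" "occurs_at w x a" "occurs_at w y a" "memory \<le> length w"
  shows "(\<lambda>j. if j < a then x j else y j) \<in> X"
proof (rule glue_mem[OF assms(1,2)])
  fix j assume "a \<le> j" "j < a + int memory"
  then show "x j = y j" using occurs_at_agree[OF assms(3,4)] assms(5) by simp
qed

lemma cclosed_X: "cclosed X" and shift_image_X: "shift ` X = X"
  using transitive unfolding transitive_subshift_def subshift_def by blast+

lemma shift_by_mem: "x \<in> X \<Longrightarrow> shift_by c x \<in> X"
proof (induction c arbitrary: x rule: int_induct[where k = 0])
  case (step1 c)
  have "shift (shift_by c x) \<in> shift ` X" using step1 by blast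
  moreover have "shift_by (c + 1) x = shift (shift_by c x)"
    by (simp add: shift_eq_shift_by_1 add.commute)
  ultimately show ?case using shift_image_X by simp
next
  case (step2 c)
  have "shift_by c x \<in> X" using step2 by blast
  then have "shift_by c x \<in> shift ` X" using shift_image_X by simp
  then obtain z where z: "z \<in> X" "shift_by c x = shift z" by blast
  have "shift_by (c - 1) x = shift_by (-1) (shift_by c x)" by simp
  also have "\<dots> = z" using z(2) by (simp add: shift_eq_shift_by_1)
  finally show ?case using z(1) by simp
qed simp

lemma window_in_language: "x \<in> X \<Longrightarrow> window x a n \<in> language X"
  unfolding language_def using occurs_at_window by blast

lemma language_occurs_at:
  assumes "w \<in> language X"
  obtains x where "x \<in> X" "occurs_at w x a"
proof -
  obtain x i where "x \<in> X" "occurs_at w x i" using assms unfolding language_def by blast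
  then have "shift_by (i - a) x \<in> X" "occurs_at w (shift_by (i - a) x) a"
    using shift_by_mem by (auto simp: occurs_at_shift_by)
  then show ?thesis by (rule that)
qed

lemma language_transitive:
  "u \<in> language X \<Longrightarrow> v \<in> language X \<Longrightarrow> \<exists>w. u @ w @ v \<in> language X"
  using transitive unfolding transitive_subshift_def by blast

definition words :: "nat \<Rightarrow> 'a list set" where
  "words n = {w \<in> language X. length w = n}"

lemma finite_words: "finite (words n)"
proof (rule finite_subset)
  show "words n \<subseteq> {w. set w \<subseteq> UNIV \<and> length w = n}" by (auto simp: words_def)
  show "finite {w. set w \<subseteq> (UNIV :: 'a set) \<and> length w = n}" by (rule finite_lists_length_eq) simp
qed

lemma window_in_words: "x \<in> X \<Longrightarrow> window x a n \<in> words n"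
  by (simp add: words_def window_in_language)

lemma card_words_pos: "X \<noteq> {} \<Longrightarrow> 0 < card (words n)"
proof -
  assume "X \<noteq> {}"
  then obtain x where "x \<in> X" by blast
  then have "words n \<noteq> {}" using window_in_words by blast
  then show ?thesis using finite_words by (simp add: card_gt_0_iff)
qed

lemma card_words_add_le: "card (words (m + n)) \<le> card (words m) * CARD('a) ^ n"
proof -
  let ?A = "{w. set w \<subseteq> (UNIV :: 'a set) \<and> length w = n}"
  have "inj_on (\<lambda>w. (take m w, drop m w)) (words (m + n))"
    by (rule inj_onI) (metis append_take_drop_id prod.inject)
  moreover have "(\<lambda>w. (take m w, drop m w)) ` words (m + n) \<subseteq> words m \<times> ?A"
  proof
    fix p assume "p \<in> (\<lambda>w. (take m w, drop m w)) ` words (m + n)"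
    then obtain w where w: "w \<in> words (m + n)" "p = (take m w, drop m w)" by blast
    then obtain x i where x: "x \<in> X" "occurs_at w x i" unfolding words_def language_def by blast
    have "take m w = window x i m"
    proof (rule nth_equalityI)
      show "length (take m w) = length (window x i m)" using w(1) by (simp add: words_def)
      show "take m w ! k = window x i m ! k" if "k < length (take m w)" for k
        using that x(2) w(1) by (simp add: occurs_at_iff_nth words_def)
    qed
    then show "p \<in> words m \<times> ?A" using w window_in_words[OF x(1)] by (simp add: words_def)
  qed
  moreover have "finite (words m \<times> ?A)"
    using finite_words finite_lists_length_eq[of "UNIV :: 'a set" n] by simp
  ultimately have "card (words (m + n)) \<le> card (words m \<times> ?A)" by (rule card_inj_on_le)
  also have "\<dots> = card (words m) * CARD('a) ^ n"
    using card_lists_length_eq[of "UNIV :: 'a set" n] by (simp add: card_cartesian_product)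
  finally show ?thesis .
qed

lemma X_sequentially_compact:
  fixes s :: "nat \<Rightarrow> int \<Rightarrow> 'a"
  assumes "\<And>n. s n \<in> X"
  obtains r :: "nat \<Rightarrow> nat" and x where "strict_mono r" "x \<in> X"
    "\<And>N. \<exists>K. \<forall>k\<ge>K. \<forall>j. nat \<bar>j\<bar> \<le> N \<longrightarrow> s (r k) j = x j"
  by (rule cclosed_sequentially_compact[where s = s, OF cclosed_X assms]) iprover

lemma bounded_gap_words:
  assumes "finite A" "A \<subseteq> language X" "finite B" "B \<subseteq> language X"
  obtains G where "\<And>a b. a \<in> A \<Longrightarrow> b \<in> B \<Longrightarrow> \<exists>g. length g \<le> G \<and> a @ g @ b \<in> language X"
proof -
  have gap: "\<forall>p\<in>A \<times> B. \<exists>g. fst p @ g @ snd p \<in> language X"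
  proof
    fix p assume "p \<in> A \<times> B"
    then show "\<exists>g. fst p @ g @ snd p \<in> language X" using assms(2,4) by (intro language_transitive) auto
  qed
  have "finite (A \<times> B)" using assms(1,3) by simp
  then obtain G where G: "\<forall>p\<in>A \<times> B. \<exists>g. fst p @ g @ snd p \<in> language X \<and> length g \<le> G"
    using finite_bounded_choice[OF _ gap] by blast
  show ?thesis
  proof (rule that)
    fix a b assume "a \<in> A" "b \<in> B"
    then show "\<exists>g. length g \<le> G \<and> a @ g @ b \<in> language X" using G by fastforce
  qed
qed

lemma reach_word:
  assumes u: "u \<in> language X"
  obtains G where "\<And>x i. x \<in> X \<Longrightarrow>
    \<exists>y\<in>X. \<exists>g\<le>G. (\<forall>j<i. y j = x j) \<and> occurs_at u y (i + int g)"
proof -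
  have "finite (words memory)" "words memory \<subseteq> language X" "finite {u}" "{u} \<subseteq> language X"
    using finite_words u by (auto simp: words_def)
  then obtain G where G: "\<And>a. a \<in> words memory \<Longrightarrow> \<exists>g. length g \<le> G \<and> a @ g @ u \<in> language X"
    by (rule bounded_gap_words) blast
  have "\<exists>y\<in>X. \<exists>g\<le>G. (\<forall>j<i. y j = x j) \<and> occurs_at u y (i + int g)" if x: "x \<in> X" for x i
  proof -
    define a where "a = i - int memory"
    define \<alpha> where "\<alpha> = window x a memory"
    obtain \<gamma> where \<gamma>: "length \<gamma> \<le> G" "\<alpha> @ \<gamma> @ u \<in> language X"
      using G window_in_words[OF x] unfolding \<alpha>_def by blast
    obtain p where p: "p \<in> X" "occurs_at (\<alpha> @ \<gamma> @ u) p a"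
      using language_occurs_at[OF \<gamma>(2)] by blast
    have p\<alpha>: "occurs_at \<alpha> p a" and pu: "occurs_at u p (i + int (length \<gamma>))"
      using p(2) by (simp_all add: occurs_at_append \<alpha>_def a_def algebra_simps)
    have x\<alpha>: "occurs_at \<alpha> x a" by (simp add: \<alpha>_def occurs_at_window)
    define y where "y = (\<lambda>j. if j < a then x j else p j)"
    have "y \<in> X" unfolding y_def by (rule glue_mem_at_common_word[OF x p(1) x\<alpha> p\<alpha>]) (simp add: \<alpha>_def)
    moreover have "y j = x j" if "j < i" for j
      using occurs_at_agree[OF x\<alpha> p\<alpha>, of j] that by (simp add: y_def \<alpha>_def a_def)
    moreover have "occurs_at u y (i + int (length \<gamma>))"
      using pu by (subst occurs_at_cong[where y = p]) (simp_all add: y_def a_def)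
    ultimately show ?thesis using \<gamma>(1) by blast
  qed
  then show ?thesis by (rule that)
qed

lemma continue_after_word:
  assumes u: "u \<in> language X" "memory \<le> length u"
  obtains G where "\<And>z x p i. z \<in> X \<Longrightarrow> x \<in> X \<Longrightarrow> occurs_at u z p \<Longrightarrow>
    \<exists>y\<in>X. \<exists>g\<le>G. (\<forall>j < p + int (length u). y j = z j) \<and>
      (\<forall>j\<ge>0. y (p + int (length u) + int g + j) = x (i + j))"
proof -
  have "finite {u}" "{u} \<subseteq> language X" "finite (words memory)" "words memory \<subseteq> language X"
    using finite_words u by (auto simp: words_def)
  then obtain G where G: "\<And>b. b \<in> words memory \<Longrightarrow> \<exists>g. length g \<le> G \<and> u @ g @ b \<in> language X"
    by (rule bounded_gap_words) blast
  have "\<exists>y\<in>X. \<exists>g\<le>G. (\<forall>j < p + int (length u). y j = z j) \<and>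
      (\<forall>j\<ge>0. y (p + int (length u) + int g + j) = x (i + j))"
    if z: "z \<in> X" and x: "x \<in> X" and zu: "occurs_at u z p" for z x p i
  proof -
    define \<beta> where "\<beta> = window x i memory"
    obtain \<gamma> where \<gamma>: "length \<gamma> \<le> G" "u @ \<gamma> @ \<beta> \<in> language X"
      using G window_in_words[OF x] unfolding \<beta>_def by blast
    obtain q where q: "q \<in> X" "occurs_at (u @ \<gamma> @ \<beta>) q p"
      using language_occurs_at[OF \<gamma>(2)] by blast
    define s where "s = p + int (length u) + int (length \<gamma>)"
    have qu: "occurs_at u q p" and q\<beta>: "occurs_at \<beta> q s"
      using q(2) by (simp_all add: occurs_at_append s_def add.assoc)
    define y1 where "y1 = (\<lambda>j. if j < p then z j else q j)"
    have y1: "y1 \<in> X" unfolding y1_def by (rule glue_mem_at_common_word[OF z q(1) zu qu u(2)])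
    define x' where "x' = shift_by (i - s) x"
    have x': "x' \<in> X" "occurs_at \<beta> x' s"
      using shift_by_mem[OF x] by (simp_all add: x'_def occurs_at_shift_by \<beta>_def occurs_at_window)
    have y1\<beta>: "occurs_at \<beta> y1 s"
      using q\<beta> by (subst occurs_at_cong[where y = q]) (simp_all add: y1_def s_def)
    define y where "y = (\<lambda>j. if j < s then y1 j else x' j)"
    have "y \<in> X" unfolding y_def by (rule glue_mem_at_common_word[OF y1 x'(1) y1\<beta> x'(2)]) (simp add: \<beta>_def)
    moreover have "\<forall>j < p + int (length u). y j = z j"
      using occurs_at_agree[OF zu qu] by (simp add: y_def y1_def s_def)
    moreover have "\<forall>j\<ge>0. y (p + int (length u) + int (length \<gamma>) + j) = x (i + j)"
    proof (intro allI impI)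
      fix j :: int assume "0 \<le> j"
      then have "y (s + j) = x' (s + j)" by (simp add: y_def)
      also have "\<dots> = x (i + j)" by (simp add: x'_def shift_by_apply) (metis add.commute)
      finally show "y (p + int (length u) + int (length \<gamma>) + j) = x (i + j)" by (simp add: s_def)
    qed
    ultimately show ?thesis using \<gamma>(1) by blast
  qed
  then show ?thesis by (rule that)
qed

lemma insert_word:
  assumes u: "u \<in> language X" "memory \<le> length u"
  obtains G where "\<And>x i. x \<in> X \<Longrightarrow> \<exists>y\<in>X. \<exists>g1\<le>G. \<exists>g2\<le>G.
    (\<forall>j<i. y j = x j) \<and> occurs_at u y (i + int g1) \<and>
    (\<forall>j\<ge>0. y (i + int g1 + int (length u) + int g2 + j) = x (i + j))"
proof -
  obtain G1 where G1: "\<And>x i. x \<in> X \<Longrightarrow>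
      \<exists>y\<in>X. \<exists>g\<le>G1. (\<forall>j<i. y j = x j) \<and> occurs_at u y (i + int g)"
    by (rule reach_word[OF u(1)]) blast
  obtain G2 where G2: "\<And>z x p i. z \<in> X \<Longrightarrow> x \<in> X \<Longrightarrow> occurs_at u z p \<Longrightarrow>
      \<exists>y\<in>X. \<exists>g\<le>G2. (\<forall>j < p + int (length u). y j = z j) \<and>
        (\<forall>j\<ge>0. y (p + int (length u) + int g + j) = x (i + j))"
    by (rule continue_after_word[OF u]) blast
  have "\<exists>y\<in>X. \<exists>g1\<le>max G1 G2. \<exists>g2\<le>max G1 G2. (\<forall>j<i. y j = x j) \<and>
      occurs_at u y (i + int g1) \<and> (\<forall>j\<ge>0. y (i + int g1 + int (length u) + int g2 + j) = x (i + j))"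
    if x: "x \<in> X" for x i
  proof -
    obtain y1 g1 where y1: "y1 \<in> X" "g1 \<le> G1" "\<forall>j<i. y1 j = x j" "occurs_at u y1 (i + int g1)"
      using G1[OF x] by blast
    obtain y g2 where y: "y \<in> X" "g2 \<le> G2" "\<forall>j < i + int g1 + int (length u). y j = y1 j"
        "\<forall>j\<ge>0. y (i + int g1 + int (length u) + int g2 + j) = x (i + j)"
      using G2[OF y1(1) x y1(4)] by blast
    have "\<forall>j<i. y j = x j" using y(3) y1(3) by auto
    moreover have "occurs_at u y (i + int g1)"
      using y1(4) y(3) by (subst occurs_at_cong[where y = y1]) simp_all
    ultimately show ?thesis using y(1,2,4) y1(2) by (meson max.coboundedI1 max.coboundedI2)
  qed
  then show ?thesis by (rule that)
qed

lemma word_between_occurrences: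
  assumes W: "W \<in> language X" "memory \<le> length W"
  obtains G where "\<And>P. P \<in> language X \<Longrightarrow> \<exists>y\<in>X. \<exists>g1\<le>G. \<exists>g2\<le>G.
    occurs_at W y 0 \<and> occurs_at P y (int (length W + g2)) \<and>
    occurs_at W y (int (length W + g2 + length P + g1))"
proof -
  obtain G where G: "\<And>x i. x \<in> X \<Longrightarrow> \<exists>y\<in>X. \<exists>g1\<le>G. \<exists>g2\<le>G.
      (\<forall>j<i. y j = x j) \<and> occurs_at W y (i + int g1) \<and>
      (\<forall>j\<ge>0. y (i + int g1 + int (length W) + int g2 + j) = x (i + j))"
    by (rule insert_word[OF W]) blast
  have "\<exists>y\<in>X. \<exists>g1\<le>G. \<exists>g2\<le>G. occurs_at W y 0 \<and> occurs_at P y (int (length W + g2)) \<and>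
      occurs_at W y (int (length W + g2 + length P + g1))"
    if P: "P \<in> language X" for P
  proof -
    obtain x where x: "x \<in> X" "occurs_at P x 0" using language_occurs_at[OF P] by blast
    obtain y1 g1 where y1: "y1 \<in> X" "g1 \<le> G" "\<forall>j<int (length P). y1 j = x j"
        "occurs_at W y1 (int (length P) + int g1)"
      using G[OF x(1), of "int (length P)"] by blast
    obtain y2 g2 g3 where y2: "y2 \<in> X" "g3 \<le> G" "occurs_at W y2 (int g2)"
        "\<forall>j\<ge>0. y2 (int g2 + int (length W) + int g3 + j) = y1 j"
      using G[OF y1(1), of 0] by auto
    define y where "y = shift_by (int g2) y2"
    have tail: "y (int (length W) + int g3 + j) = y1 j" if "0 \<le> j" for j
      using y2(4) that by (simp add: y_def shift_by_apply ac_simps)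
    have "occurs_at W y 0" using y2(3) by (simp add: y_def occurs_at_shift_by)
    moreover have "occurs_at P y (int (length W + g3))"
      unfolding occurs_at_iff_nth
    proof (intro allI impI)
      fix k assume "k < length P"
      then show "y (int (length W + g3) + int k) = P ! k"
        using tail[of "int k"] y1(3) x(2) by (simp add: occurs_at_iff_nth add.assoc)
    qed
    moreover have "occurs_at W y (int (length W + g3 + length P + g1))"
      unfolding occurs_at_iff_nth
    proof (intro allI impI)
      fix k assume "k < length W"
      then show "y (int (length W + g3 + length P + g1) + int k) = W ! k"
        using tail[of "int (length P) + int g1 + int k"] y1(4) by (simp add: occurs_at_iff_nth add.assoc)
    qed
    ultimately show ?thesis using shift_by_mem[OF y2(1)] y1(2) y2(2) unfolding y_def by blast
  qed
  then show ?thesis by (rule that)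
qed

lemma periodic_extension_mem:
  assumes y: "y \<in> X" and W: "occurs_at W y 0" "occurs_at W y (int K)"
    and "memory \<le> length W" "length W \<le> K"
  shows "(\<lambda>j. y (j mod int K)) \<in> X"
proof (rule mem_if_windows_mem)
  fix i
  define t where "t = i mod int K"
  have K: "0 < K" using assms(4,5) memory_pos by simp
  have t: "0 \<le> t" "t < int K" using K by (auto simp: t_def)
  have "y (t + int k) = y ((t + int k) mod int K)" if k: "k < memory" for k
  proof (cases "t + int k < int K")
    case True
    then show ?thesis using t by simp
  next
    case False
    define q where "q = nat (t + int k - int K)"
    have q: "q < length W" "t + int k = int K + int q" using False t k assms(4,5) unfolding q_def by linarith+
    have "y (int K + int q) = y (0 + int q)" using W q(1) unfolding occurs_at_iff_nth by simp
    moreover have "(t + int k) mod int K = int q" using q(1) assms(5) by (simp add: q(2))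
    ultimately show ?thesis using q(2) by simp
  qed
  moreover have "(t + int k) mod int K = (i + int k) mod int K" for k
    by (simp add: t_def mod_add_left_eq)
  moreover have "shift_by (t - i) y (i + int k) = y (t + int k)" for k
    by (simp add: shift_by_apply ac_simps)
  ultimately have "\<forall>k<memory. shift_by (t - i) y (i + int k) = y ((i + int k) mod int K)"
    by simp
  then show "\<exists>x\<in>X. \<forall>k<memory. x (i + int k) = y ((i + int k) mod int K)"
    using shift_by_mem[OF y] by blast
qed

lemma periodic_point_through_word:
  assumes W: "W \<in> language X" "memory \<le> length W"
  obtains G where "\<And>P. P \<in> language X \<Longrightarrow> \<exists>z\<in>X. \<exists>g1\<le>G. \<exists>g2\<le>G.
    (\<forall>j. z (j + int (length W + g2 + length P + g1)) = z j) \<and>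
    occurs_at W z 0 \<and> occurs_at P z (int (length W + g2))"
proof -
  obtain G where G: "\<And>P. P \<in> language X \<Longrightarrow> \<exists>y\<in>X. \<exists>g1\<le>G. \<exists>g2\<le>G.
      occurs_at W y 0 \<and> occurs_at P y (int (length W + g2)) \<and>
      occurs_at W y (int (length W + g2 + length P + g1))"
    by (rule word_between_occurrences[OF W]) blast
  have "\<exists>z\<in>X. \<exists>g1\<le>G. \<exists>g2\<le>G. (\<forall>j. z (j + int (length W + g2 + length P + g1)) = z j) \<and>
      occurs_at W z 0 \<and> occurs_at P z (int (length W + g2))"
    if P: "P \<in> language X" for P
  proof -
    obtain y g1 g2 where y: "y \<in> X" "g1 \<le> G" "g2 \<le> G" "occurs_at W y 0"
        "occurs_at P y (int (length W + g2))" "occurs_at W y (int (length W + g2 + length P + g1))"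
      using G[OF P] by blast
    define K where "K = length W + g2 + length P + g1"
    define z where "z = (\<lambda>j. y (j mod int K))"
    have "z \<in> X" unfolding z_def K_def by (rule periodic_extension_mem[OF y(1,4,6) W(2)]) simp
    moreover have "\<forall>j. z (j + int K) = z j" by (simp add: z_def)
    moreover have "occurs_at W z 0" "occurs_at P z (int (length W + g2))"
      using y(4,5) by (auto simp: z_def K_def occurs_at_iff_nth)
    ultimately show ?thesis using y(2,3) unfolding K_def by blast
  qed
  then show ?thesis by (rule that)
qed

definition avoiding :: "'a list \<Rightarrow> nat \<Rightarrow> 'a list set" where
  "avoiding u n = {w \<in> words n. \<not> (\<exists>k. factor_at u w k)}"

lemma finite_avoiding: "finite (avoiding u n)"
  using finite_words by (rule finite_subset[rotated]) (auto simp: avoiding_def)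

lemma insert_word_into_words:
  assumes u: "u \<in> language X" "memory \<le> length u"
  obtains G where "\<And>n w i. w \<in> words n \<Longrightarrow> i \<le> n \<Longrightarrow> \<exists>v g1 g2.
    v \<in> words (n + length u + 2 * G) \<and> g1 \<le> G \<and> g2 \<le> G \<and> factor_at u v (i + g1) \<and>
    (\<forall>k<i. v ! k = w ! k) \<and> (\<forall>k. i \<le> k \<longrightarrow> k < n \<longrightarrow> v ! (k + g1 + length u + g2) = w ! k)"
proof -
  obtain G where G: "\<And>x i. x \<in> X \<Longrightarrow> \<exists>y\<in>X. \<exists>g1\<le>G. \<exists>g2\<le>G.
      (\<forall>j<i. y j = x j) \<and> occurs_at u y (i + int g1) \<and>
      (\<forall>j\<ge>0. y (i + int g1 + int (length u) + int g2 + j) = x (i + j))"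
    by (rule insert_word[OF u]) blast
  have "\<exists>v g1 g2. v \<in> words (n + length u + 2 * G) \<and> g1 \<le> G \<and> g2 \<le> G \<and> factor_at u v (i + g1) \<and>
      (\<forall>k<i. v ! k = w ! k) \<and> (\<forall>k. i \<le> k \<longrightarrow> k < n \<longrightarrow> v ! (k + g1 + length u + g2) = w ! k)"
    if w: "w \<in> words n" and i: "i \<le> n" for n w i
  proof -
    obtain x where x: "x \<in> X" "occurs_at w x 0"
      using w language_occurs_at unfolding words_def by blast
    obtain y g1 g2 where y: "y \<in> X" "g1 \<le> G" "g2 \<le> G" "\<forall>j<int i. y j = x j"
        "occurs_at u y (int i + int g1)"
        "\<forall>j\<ge>0. y (int i + int g1 + int (length u) + int g2 + j) = x (int i + j)"
      using G[OF x(1), of "int i"] by blast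
    define v where "v = window y 0 (n + length u + 2 * G)"
    have "v \<in> words (n + length u + 2 * G)" unfolding v_def by (rule window_in_words[OF y(1)])
    moreover have "factor_at u v (i + g1)"
      using y(5) i y(2) by (auto simp: factor_at_def v_def occurs_at_iff_nth add.assoc)
    moreover have "\<forall>k<i. v ! k = w ! k"
      using y(4) x(2) i w by (auto simp: v_def occurs_at_iff_nth words_def)
    moreover have "v ! (k + g1 + length u + g2) = w ! k" if "i \<le> k" "k < n" for k
    proof -
      have "y (int i + int g1 + int (length u) + int g2 + (int k - int i)) = x (int i + (int k - int i))"
        using that by (intro y(6)[rule_format]) simp
      then show ?thesis
        using that x(2) w y(2,3) by (simp add: v_def occurs_at_iff_nth words_def algebra_simps)
    qed
    ultimately show ?thesis using y(2,3) by blast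
  qed
  then show ?thesis by (rule that)
qed

lemma card_avoiding_le:
  assumes u: "u \<in> language X" "memory \<le> length u"
  obtains C D where "\<And>n. card (avoiding u n) * (n + 1) \<le> card (words (n + D)) * C"
proof -
  obtain G where G: "\<And>n w i. w \<in> words n \<Longrightarrow> i \<le> n \<Longrightarrow> \<exists>v g1 g2.
      v \<in> words (n + length u + 2 * G) \<and> g1 \<le> G \<and> g2 \<le> G \<and> factor_at u v (i + g1) \<and>
      (\<forall>k<i. v ! k = w ! k) \<and> (\<forall>k. i \<le> k \<longrightarrow> k < n \<longrightarrow> v ! (k + g1 + length u + g2) = w ! k)"
    by (rule insert_word_into_words[OF u]) blast
  define D where "D = length u + 2 * G"
  define E where "E = ({..G} \<times> {..G}) \<times> {..<G + length u}"
  have "card (avoiding u n \<times> {..n}) \<le> card (words (n + D) \<times> E)" for n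
  proof -
    define S where "S = avoiding u n \<times> {..n}"
    define ins where "ins = (\<lambda>w i v g1 g2. v \<in> words (n + D) \<and> g1 \<le> G \<and> g2 \<le> G \<and>
      factor_at u v (i + g1) \<and> (\<forall>k<i. v ! k = w ! k) \<and>
      (\<forall>k. i \<le> k \<longrightarrow> k < n \<longrightarrow> v ! (k + g1 + length u + g2) = w ! k))"
    have "\<exists>t. ins (fst p) (snd p) (fst t) (fst (snd t)) (snd (snd t))" if "p \<in> S" for p
    proof -
      have "fst p \<in> words n" "snd p \<le> n" using that by (auto simp: S_def avoiding_def)
      from G[OF this] obtain v g1 g2 where "ins (fst p) (snd p) v g1 g2"
        unfolding ins_def D_def add.assoc by blast
      then show ?thesis by (intro exI[of _ "(v, g1, g2)"]) simp
    qed
    then have "\<forall>p\<in>S. \<exists>t. ins (fst p) (snd p) (fst t) (fst (snd t)) (snd (snd t))" by blast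
    from bchoice[OF this] obtain f
      where f: "\<forall>p\<in>S. ins (fst p) (snd p) (fst (f p)) (fst (snd (f p))) (snd (snd (f p)))" ..
    define first where "first = (\<lambda>v. LEAST k. factor_at u v k)"
    have bounds: "first (fst (f (w, i))) \<le> i + G" "i < first (fst (f (w, i))) + length u"
      if p: "(w, i) \<in> S" for w i
    proof -
      have w: "\<not> (\<exists>k. factor_at u w k)" "i \<le> length w" using p by (auto simp: S_def avoiding_def words_def)
      have v: "factor_at u (fst (f (w, i))) (i + fst (snd (f (w, i))))" "fst (snd (f (w, i))) \<le> G"
        "\<forall>k<i. fst (f (w, i)) ! k = w ! k"
        using bspec[OF f p] by (simp_all add: ins_def)
      from first_factor_at_bounds[OF v(1) w v(3)]
      show "first (fst (f (w, i))) \<le> i + G" "i < first (fst (f (w, i))) + length u"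
        unfolding first_def using v(2) by linarith+
    qed
    define \<Psi> where "\<Psi> = (\<lambda>p. (fst (f p), snd (f p), G + snd p - first (fst (f p))))"
    have "inj_on \<Psi> S"
    proof (rule inj_onI, clarify)
      fix w i w' i' assume p: "(w, i) \<in> S" and p': "(w', i') \<in> S" and eq: "\<Psi> (w, i) = \<Psi> (w', i')"
      then have same: "f (w, i) = f (w', i')" by (simp add: \<Psi>_def prod_eq_iff)
      then have ii: "i = i'" using eq bounds[OF p] bounds[OF p'] by (simp add: \<Psi>_def)
      obtain v g1 g2 where v: "f (w, i) = (v, g1, g2)" by (metis prod.exhaust)
      have ins: "ins w i v g1 g2" "ins w' i v g1 g2" using f p p' same ii v by auto
      have "w ! k = w' ! k" if "k < n" for k
      proof (cases "k < i")
        case True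
        then show ?thesis using ins unfolding ins_def by simp
      next
        case False
        then show ?thesis using ins that unfolding ins_def by simp
      qed
      moreover have "length w = n" "length w' = n" using p p' by (auto simp: S_def avoiding_def words_def)
      ultimately show "w = w' \<and> i = i'" using ii by (simp add: nth_equalityI)
    qed
    moreover have "\<Psi> (w, i) \<in> words (n + D) \<times> E" if p: "(w, i) \<in> S" for w i
    proof -
      have "fst (f (w, i)) \<in> words (n + D)" "fst (snd (f (w, i))) \<le> G" "snd (snd (f (w, i))) \<le> G"
        using bspec[OF f p] by (simp_all add: ins_def)
      then show ?thesis using bounds[OF p] by (simp add: \<Psi>_def E_def mem_Times_iff)
    qed
    then have "\<Psi> ` S \<subseteq> words (n + D) \<times> E" by (metis image_subsetI prod.collapse)
    moreover have "finite (words (n + D) \<times> E)" using finite_words by (simp add: E_def)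
    ultimately show ?thesis unfolding S_def by (rule card_inj_on_le)
  qed
  then have "card (avoiding u n) * (n + 1) \<le> card (words (n + D)) * card E" for n
    by (simp add: card_cartesian_product)
  then show ?thesis by (rule that)
qed

definition has_radius :: "((int \<Rightarrow> 'a) \<Rightarrow> int \<Rightarrow> 'a) \<Rightarrow> nat \<Rightarrow> bool" where
  "has_radius G r \<longleftrightarrow> (\<forall>x\<in>X. \<forall>y\<in>X. \<forall>i. (\<forall>j. \<bar>j - i\<bar> \<le> int r \<longrightarrow> x j = y j) \<longrightarrow> G x i = G y i)"

definition exchangeable :: "((int \<Rightarrow> 'a) \<Rightarrow> int \<Rightarrow> 'a) \<Rightarrow> 'a list \<Rightarrow> 'a list \<Rightarrow> bool" where
  "exchangeable G v v' \<longleftrightarrow>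
    (\<forall>x a. x \<in> X \<longrightarrow> occurs_at v x a \<longrightarrow> replace x a v' \<in> X \<and> G (replace x a v') = G x)"

definition block_image :: "((int \<Rightarrow> 'a) \<Rightarrow> int \<Rightarrow> 'a) \<Rightarrow> nat \<Rightarrow> 'a list \<Rightarrow> 'a list \<Rightarrow> bool" where
  "block_image G r P T \<longleftrightarrow>
    length P = length T + 2 * r \<and> (\<exists>x\<in>X. occurs_at P x 0 \<and> occurs_at T (G x) (int r))"

lemma block_image_unique:
  assumes G: "has_radius G r" and "block_image G r P T" "block_image G r P T'"
  shows "T = T'"
proof -
  obtain x where x: "x \<in> X" "occurs_at P x 0" "occurs_at T (G x) (int r)"
    and l: "length P = length T + 2 * r"
    using assms(2) unfolding block_image_def by blast
  obtain x' where x': "x' \<in> X" "occurs_at P x' 0" "occurs_at T' (G x') (int r)"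
    and l': "length P = length T' + 2 * r"
    using assms(3) unfolding block_image_def by blast
  have "T ! t = T' ! t" if t: "t < length T" for t
  proof -
    have "x j = x' j" if "\<bar>j - (int r + int t)\<bar> \<le> int r" for j
      using occurs_at_agree[OF x(2) x'(2), of j] that t l by simp
    then have "G x (int r + int t) = G x' (int r + int t)"
      using G x(1) x'(1) unfolding has_radius_def by blast
    then show ?thesis using x(3) x'(3) t l l' unfolding occurs_at_iff_nth by simp
  qed
  then show ?thesis using l l' by (simp add: nth_equalityI)
qed

lemma block_image_exists:
  assumes "X \<subseteq> G ` X" "T \<in> words n"
  shows "\<exists>P\<in>words (n + 2 * r). block_image G r P T"
proof -
  obtain y where y: "y \<in> X" "occurs_at T y (int r)"
    using assms(2) language_occurs_at unfolding words_def by blast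
  obtain x where x: "x \<in> X" "y = G x" using assms(1) y(1) by blast
  define P where "P = window x 0 (n + 2 * r)"
  have "P \<in> words (n + 2 * r)" unfolding P_def by (rule window_in_words[OF x(1)])
  moreover have "block_image G r P T"
    unfolding block_image_def using x y assms(2)
    by (intro conjI bexI[of _ x]) (auto simp: P_def occurs_at_window words_def)
  ultimately show ?thesis by blast
qed

lemma block_image_avoiding:
  assumes R: "wf R" and v: "(v', v) \<in> lex R" "length v' = length v" and exch: "exchangeable G v v'"
  shows "P \<in> words n \<Longrightarrow> block_image G r P T \<Longrightarrow> \<exists>P'\<in>avoiding v n. block_image G r P' T"
proof (induction P rule: wf_induct_rule[OF wf_lex[OF R]])
  case (1 P)
  show ?case
  proof (cases "\<exists>k. factor_at v P k")
    case False
    then show ?thesis using 1(2,3) by (auto simp: avoiding_def)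
  next
    case True
    then obtain k where k: "factor_at v P k" by blast
    obtain x where x: "x \<in> X" "occurs_at P x 0" "occurs_at T (G x) (int r)"
      and l: "length P = length T + 2 * r"
      using 1(3) unfolding block_image_def by blast
    have lP: "length P = n" using 1(2) by (simp add: words_def)
    then have P: "P = window x 0 n" using x(2) by (metis occurs_at_iff_window)
    have xv: "occurs_at v x (int k)"
      unfolding occurs_at_iff_nth
    proof (intro allI impI)
      fix t assume t: "t < length v"
      then have "k + t < length P" "P ! (k + t) = v ! t" using k unfolding factor_at_def by auto
      moreover have "\<forall>j<length P. x (0 + int j) = P ! j" using x(2) unfolding occurs_at_iff_nth .
      ultimately show "x (int k + int t) = v ! t" by (metis add_0 of_nat_add)
    qed
    define x' where "x' = replace x (int k) v'"
    have x': "x' \<in> X" "G x' = G x" using exch x(1) xv unfolding exchangeable_def x'_def by blast+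
    define P' where "P' = window x' 0 n"
    have "P' = take k P @ v' @ drop (k + length v) P"
      using window_replace[of k v' n x] k v(2) lP unfolding P'_def x'_def factor_at_def by (simp add: P)
    moreover have "P = take k P @ v @ drop (k + length v) P" by (rule factor_at_split[OF k])
    ultimately have "(P', P) \<in> lex R" using lex_replace_factor[OF v] by metis
    moreover have "P' \<in> words n" unfolding P'_def by (rule window_in_words[OF x'(1)])
    moreover have "block_image G r P' T"
      using x'(1) x(3) l lP unfolding block_image_def P'_def
      by (intro conjI bexI[of _ x']) (auto simp: x'(2) occurs_at_window)
    ultimately show ?thesis using 1(1) by blast
  qed
qed

lemma no_exchangeable_word:
  assumes surj: "X \<subseteq> G ` X" and radius: "has_radius G r"
    and v: "v \<in> language X" "memory \<le> length v" and "length v' = length v"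
    and "wf R" "(v', v) \<in> lex R" and "exchangeable G v v'"
  shows False
proof -
  obtain C D where CD: "\<And>n. card (avoiding v n) * (n + 1) \<le> card (words (n + D)) * C"
    by (rule card_avoiding_le[OF v]) blast
  define K where "K = CARD('a) ^ (2 * r + D)"
  define n where "n = C * K"
  have "\<exists>P. P \<in> avoiding v (n + 2 * r) \<and> block_image G r P T" if "T \<in> words n" for T
    using block_image_exists[OF surj that] block_image_avoiding[OF assms(6,7,5,8)] by blast
  then obtain h where h: "\<And>T. T \<in> words n \<Longrightarrow> h T \<in> avoiding v (n + 2 * r) \<and> block_image G r (h T) T"
    by metis
  have "inj_on h (words n)" using block_image_unique[OF radius] h by (metis inj_onI)
  then have "card (words n) \<le> card (avoiding v (n + 2 * r))"
    using h finite_avoiding by (intro card_inj_on_le) auto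
  then have "card (words n) * (n + 2 * r + 1) \<le> card (avoiding v (n + 2 * r)) * (n + 2 * r + 1)"
    by (rule mult_right_mono) simp
  also have "\<dots> \<le> card (words (n + 2 * r + D)) * C" by (rule CD)
  also have "\<dots> \<le> card (words n) * K * C"
    using card_words_add_le[of n "2 * r + D"] by (simp add: K_def add.assoc)
  also have "\<dots> = card (words n) * n" by (simp add: n_def)
  finally have "card (words n) * (n + 2 * r + 1) \<le> card (words n) * n" .
  moreover obtain x where "x \<in> X" using language_occurs_at[OF v(1)] by blast
  then have "card (words n) * n < card (words n) * (n + 2 * r + 1)"
    using card_words_pos by (intro mult_strict_left_mono) auto
  ultimately show False by linarith
qed

lemma no_mutually_exchangeable_words:
  assumes surj: "X \<subseteq> G ` X" and radius: "has_radius G r"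
    and u: "u \<in> language X" "memory \<le> length u" and "length u' = length u" "u \<noteq> u'"
    and "exchangeable G u u'" "exchangeable G u' u"
  shows False
proof -
  obtain R :: "('a \<times> 'a) set" where R: "wf R" "total R" using ex_total_wf_order by blast
  obtain x where x: "x \<in> X" "occurs_at u x 0" using language_occurs_at[OF u(1)] by blast
  then have "replace x 0 u' \<in> X" using assms(7) unfolding exchangeable_def by blast
  then have u': "u' \<in> language X" unfolding language_def using occurs_at_replace by blast
  have "(u', u) \<in> lenlex R \<or> (u, u') \<in> lenlex R"
    using total_lenlex[OF R(2)] assms(6) unfolding total_on_def by blast
  then consider "(u', u) \<in> lex R" | "(u, u') \<in> lex R"
    using assms(5) unfolding lenlex_conv by auto
  then show False
  proof cases
    case 1
    show False by (rule no_exchangeable_word[OF surj radius u assms(5) R(1) 1 assms(7)])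
  next
    case 2
    have "memory \<le> length u'" using u(2) assms(5) by simp
    from no_exchangeable_word[OF surj radius u' this assms(5)[symmetric] R(1) 2 assms(8)]
    show False .
  qed
qed

end

locale sft_automaton = transitive_sft X for X :: "(int \<Rightarrow> 'a::finite) set" +
  fixes F :: "(int \<Rightarrow> 'a) \<Rightarrow> (int \<Rightarrow> 'a)"
  assumes automaton: "cellular_automaton X F"
begin

lemma F_mem: "x \<in> X \<Longrightarrow> F x \<in> X"
  and F_shift: "x \<in> X \<Longrightarrow> F (shift x) = shift (F x)"
  and F_continuous: "ccontinuous_on X F"
  using automaton unfolding cellular_automaton_def by blast+

lemma F_shift_by: "x \<in> X \<Longrightarrow> F (shift_by c x) = shift_by c (F x)"
proof (induction c arbitrary: x rule: int_induct[where k = 0])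
  case (step1 c)
  have "F (shift_by (c + 1) x) = F (shift (shift_by c x))"
    by (simp add: shift_eq_shift_by_1 add.commute)
  also have "\<dots> = shift (F (shift_by c x))" using F_shift shift_by_mem step1.prems by blast
  also have "\<dots> = shift_by (c + 1) (F x)" using step1 by (simp add: shift_eq_shift_by_1 add.commute)
  finally show ?case .
next
  case (step2 c)
  have "shift_by c (F x) = F (shift (shift_by (c - 1) x))" using step2 by (simp add: shift_eq_shift_by_1)
  also have "\<dots> = shift (F (shift_by (c - 1) x))" using F_shift shift_by_mem step2.prems by blast
  finally have "shift_by (-1) (shift_by c (F x)) = shift_by (-1) (shift (F (shift_by (c - 1) x)))"
    by simp
  then show ?case by (simp add: shift_eq_shift_by_1)
qed simp

lemma funpow_mem: "x \<in> X \<Longrightarrow> (F ^^ n) x \<in> X"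
  by (induction n) (auto simp: F_mem)

lemma funpow_shift_by: "x \<in> X \<Longrightarrow> (F ^^ n) (shift_by c x) = shift_by c ((F ^^ n) x)"
  by (induction n) (auto simp: F_shift_by funpow_mem)

lemma funpow_surjective: "F ` X = X \<Longrightarrow> X \<subseteq> (F ^^ n) ` X"
proof (induction n)
  case (Suc n)
  show ?case
  proof
    fix y assume "y \<in> X"
    then obtain x where x: "x \<in> X" "y = (F ^^ n) x" using Suc by blast
    then obtain z where z: "z \<in> X" "x = F z" using Suc.prems by blast
    then have "(F ^^ Suc n) z = y" using x by (simp only: funpow_Suc_right comp_apply)
    then show "y \<in> (F ^^ Suc n) ` X" using z(1) by blast
  qed
qed simp

lemma uniformly_local_at_origin:
  "\<exists>r. \<forall>x\<in>X. \<forall>y\<in>X. (\<forall>j. nat \<bar>j\<bar> \<le> r \<longrightarrow> x j = y j) \<longrightarrow> F x 0 = F y 0"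
proof (rule ccontr)
  assume "\<not> ?thesis"
  then have "\<forall>r. \<exists>x\<in>X. \<exists>y\<in>X. (\<forall>j. nat \<bar>j\<bar> \<le> r \<longrightarrow> x j = y j) \<and> F x 0 \<noteq> F y 0" by blast
  then obtain xs ys :: "nat \<Rightarrow> int \<Rightarrow> 'a" where xy: "\<And>r. xs r \<in> X" "\<And>r. ys r \<in> X"
    "\<And>r j. nat \<bar>j\<bar> \<le> r \<Longrightarrow> xs r j = ys r j" "\<And>r. F (xs r) 0 \<noteq> F (ys r) 0"
    by metis
  obtain s :: "nat \<Rightarrow> nat" and z where sz: "strict_mono s" "z \<in> X"
    "\<And>N. \<exists>K. \<forall>k\<ge>K. \<forall>j. nat \<bar>j\<bar> \<le> N \<longrightarrow> xs (s k) j = z j"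
    by (rule X_sequentially_compact[of xs, OF xy(1)]) iprover
  obtain d where d: "0 < d" "\<And>y. y \<in> X \<Longrightarrow> cdist z y < d \<Longrightarrow> cdist (F z) (F y) < 1"
    using F_continuous sz(2) unfolding ccontinuous_on_def by (meson zero_less_one)
  obtain N where N: "(1/2) ^ N < d" using ex_half_power_less d(1) by blast
  obtain K where K: "\<And>k j. K \<le> k \<Longrightarrow> nat \<bar>j\<bar> \<le> N \<Longrightarrow> xs (s k) j = z j" using sz(3) by blast
  define k where "k = max K N"
  have "N \<le> s k" using seq_suble[OF sz(1), of k] by (simp add: k_def)
  then have "cdist z (xs (s k)) < (1/2) ^ N" "cdist z (ys (s k)) < (1/2) ^ N"
    unfolding cdist_less_half_power_iff using K[of k] xy(3)[of _ "s k"] by (auto simp: k_def)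
  then have "cdist (F z) (F (xs (s k))) < (1/2) ^ 0" "cdist (F z) (F (ys (s k))) < (1/2) ^ 0"
    using d(2) xy(1,2) N by simp_all
  then have "F z 0 = F (xs (s k)) 0" "F z 0 = F (ys (s k)) 0"
    unfolding cdist_less_half_power_iff by simp_all
  then show False using xy(4) by metis
qed

lemma ex_radius: "\<exists>r. has_radius F r"
proof -
  obtain r where r: "\<And>x y. x \<in> X \<Longrightarrow> y \<in> X \<Longrightarrow> (\<forall>j. nat \<bar>j\<bar> \<le> r \<longrightarrow> x j = y j) \<Longrightarrow> F x 0 = F y 0"
    using uniformly_local_at_origin by blast
  have "F x i = F y i"
    if "x \<in> X" "y \<in> X" and agree: "\<forall>j. \<bar>j - i\<bar> \<le> int r \<longrightarrow> x j = y j" for x y i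
  proof -
    have "F (shift_by i x) 0 = F (shift_by i y) 0"
      using agree by (intro r shift_by_mem that) (auto simp: shift_by_apply)
    then show ?thesis using that by (simp add: F_shift_by shift_by_apply)
  qed
  then show ?thesis unfolding has_radius_def by blast
qed

definition radius :: nat where
  "radius = (SOME r. has_radius F r)"

lemma has_radius_F: "has_radius F radius"
  unfolding radius_def using ex_radius by (rule someI_ex)

lemma has_radius_funpow: "has_radius (F ^^ n) (n * radius)"
proof (induction n)
  case (Suc n)
  show ?case unfolding has_radius_def
  proof (intro ballI allI impI)
    fix x y i assume x: "x \<in> X" and y: "y \<in> X"
      and agree: "\<forall>j. \<bar>j - i\<bar> \<le> int (Suc n * radius) \<longrightarrow> x j = y j"
    have "(F ^^ n) x j = (F ^^ n) y j" if j: "\<bar>j - i\<bar> \<le> int radius" for j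
    proof -
      have "x k = y k" if "\<bar>k - j\<bar> \<le> int (n * radius)" for k
      proof -
        have "int (Suc n * radius) = int (n * radius) + int radius" by simp
        then have "\<bar>k - i\<bar> \<le> int (Suc n * radius)" using that j by arith
        then show ?thesis using agree by blast
      qed
      then show ?thesis using Suc.IH x y unfolding has_radius_def by blast
    qed
    then show "(F ^^ Suc n) x i = (F ^^ Suc n) y i"
      using has_radius_F funpow_mem x y unfolding has_radius_def by simp
  qed
qed (simp add: has_radius_def)

lemma mem_image_if_approximated:
  assumes "y \<in> X" and approx: "\<And>n. \<exists>q\<in>X. cdist y (F q) < (1/2) ^ n"
  shows "y \<in> F ` X"
proof -
  obtain qs where qs: "\<And>n. qs n \<in> X" "\<And>n. cdist y (F (qs n)) < (1/2) ^ n" using approx by metis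
  obtain s :: "nat \<Rightarrow> nat" and z where sz: "strict_mono s" "z \<in> X"
    "\<And>N. \<exists>K. \<forall>k\<ge>K. \<forall>j. nat \<bar>j\<bar> \<le> N \<longrightarrow> qs (s k) j = z j"
    by (rule X_sequentially_compact[of qs, OF qs(1)]) iprover
  have "F z i = y i" for i
  proof -
    obtain K where K: "\<And>k j. K \<le> k \<Longrightarrow> nat \<bar>j\<bar> \<le> nat \<bar>i\<bar> + radius \<Longrightarrow> qs (s k) j = z j"
      using sz(3) by blast
    define k where "k = max K (nat \<bar>i\<bar>)"
    have "z j = qs (s k) j" if "\<bar>j - i\<bar> \<le> int radius" for j
    proof -
      have "nat \<bar>j\<bar> \<le> nat \<bar>i\<bar> + radius" using that by arith
      then show ?thesis using K[of k] by (simp add: k_def)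
    qed
    then have "F z i = F (qs (s k)) i"
      using has_radius_F sz(2) qs(1) unfolding has_radius_def by blast
    also have "\<dots> = y i"
      using qs(2)[of "s k"] seq_suble[OF sz(1), of k] unfolding cdist_less_half_power_iff
      by (auto simp: k_def)
    finally show ?thesis .
  qed
  then have "F z = y" ..
  then show ?thesis using sz(2) by blast
qed

lemma surjective_if_periodic_dense:
  assumes "cdense_in (periodic_points X F) X"
  shows "F ` X = X"
proof
  show "F ` X \<subseteq> X" using F_mem by blast
  show "X \<subseteq> F ` X"
  proof
    fix y assume y: "y \<in> X"
    have "\<exists>q\<in>X. cdist y (F q) < (1/2) ^ n" for n
    proof -
      obtain p where p: "p \<in> periodic_points X F" "cdist y p < (1/2) ^ n"
        using assms y unfolding cdense_in_def by (meson zero_less_divide_1_iff zero_less_numeral zero_less_power)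
      then obtain k where k: "p \<in> X" "1 \<le> k" "(F ^^ k) p = p" unfolding periodic_points_def by blast
      moreover have "Suc (k - 1) = k" using k(2) by simp
      ultimately have "(F ^^ Suc (k - 1)) p = p" by simp
      then have "F ((F ^^ (k - 1)) p) = p" by simp
      then show ?thesis using p(2) funpow_mem[OF k(1)] by metis
    qed
    then show "y \<in> F ` X" by (rule mem_image_if_approximated[OF y])
  qed
qed

end

locale sft_automaton_eq_point = sft_automaton X F for X :: "(int \<Rightarrow> 'a::finite) set" and F +
  fixes e :: "int \<Rightarrow> 'a"
  assumes eq_point: "equicontinuity_point X F e"
begin

lemma e_mem: "e \<in> X"
  using eq_point unfolding equicontinuity_point_def by blast

definition wall :: "nat \<Rightarrow> (int \<Rightarrow> 'a) \<Rightarrow> int \<Rightarrow> bool" where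
  "wall m x c \<longleftrightarrow> (\<forall>j. \<bar>j\<bar> \<le> int m \<longrightarrow> x (c + j) = e j)"

definition blocking :: "nat \<Rightarrow> nat \<Rightarrow> bool" where
  "blocking m R \<longleftrightarrow> (\<forall>x\<in>X. \<forall>c. wall m x c \<longrightarrow>
      (\<forall>n j. \<bar>j\<bar> \<le> int R \<longrightarrow> (F ^^ n) x (c + j) = (F ^^ n) e j))"

lemma wall_shift_by: "wall m x (c + d) \<Longrightarrow> wall m (shift_by d x) c"
  unfolding wall_def by (simp add: shift_by_apply algebra_simps)

lemma wall_mono: "wall m x c \<Longrightarrow> m' \<le> m \<Longrightarrow> wall m' x c"
  unfolding wall_def by auto

lemma wall_periodic:
  assumes "\<forall>j. x (j + K) = x j" "wall m x c"
  shows "wall m x (c + K)"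
  unfolding wall_def
proof (intro allI impI)
  fix j assume "\<bar>j\<bar> \<le> int m"
  then have "x (c + j) = e j" using assms(2) unfolding wall_def by blast
  moreover have "x (c + K + j) = x (c + j)" using assms(1) by (metis add.commute add.left_commute)
  ultimately show "x (c + K + j) = e j" by simp
qed

lemma ex_blocking: "\<exists>m\<ge>R. blocking m R"
proof -
  have "(0::real) < (1/2) ^ Suc R" by simp
  then obtain \<eta> where \<eta>: "0 < \<eta>" "\<And>y. y \<in> X \<Longrightarrow> cdist e y \<le> \<eta> \<Longrightarrow>
      \<forall>n::nat. 0 < n \<longrightarrow> cdist ((F ^^ n) e) ((F ^^ n) y) \<le> (1/2) ^ Suc R"
    using eq_point unfolding equicontinuity_point_def by blast
  obtain N where N: "(1/2) ^ N < \<eta>" using ex_half_power_less \<eta>(1) by blast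
  define m where "m = max R N"
  have "(F ^^ n) x (c + j) = (F ^^ n) e j"
    if x: "x \<in> X" and w: "wall m x c" and j: "\<bar>j\<bar> \<le> int R" for x c n j
  proof (cases "n = 0")
    case True
    then show ?thesis using w j unfolding wall_def by (simp add: m_def)
  next
    case False
    define y where "y = shift_by c x"
    have "\<forall>j. nat \<bar>j\<bar> \<le> m \<longrightarrow> e j = y j"
      using w unfolding wall_def y_def by (auto simp: shift_by_apply add.commute)
    then have "cdist e y \<le> (1/2) ^ Suc m" unfolding cdist_le_half_power_Suc_iff .
    also have "\<dots> \<le> (1/2) ^ N" by (rule power_decreasing) (auto simp: m_def)
    finally have close: "cdist e y \<le> \<eta>" using N by linarith
    have "cdist ((F ^^ n) e) ((F ^^ n) y) \<le> (1/2) ^ Suc R"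
      using \<eta>(2)[OF _ close] shift_by_mem[OF x] False by (simp add: y_def)
    then have "(F ^^ n) e j = (F ^^ n) y j" using j unfolding cdist_le_half_power_Suc_iff by auto
    then show ?thesis using funpow_shift_by[OF x] by (simp add: y_def shift_by_apply add.commute)
  qed
  then have "blocking m R" unfolding blocking_def by blast
  moreover have "R \<le> m" by (simp add: m_def)
  ultimately show ?thesis by blast
qed

lemma funpow_agree_shielded:
  assumes x: "x \<in> X" and y: "y \<in> X" and blk: "blocking m R"
    and agree: "\<forall>i\<in>J. x i = y i"
    and J: "\<forall>i\<in>J. (\<exists>c\<in>Cs. \<bar>i - c\<bar> \<le> int R) \<or> (\<forall>j. \<bar>j - i\<bar> \<le> int radius \<longrightarrow> j \<in> J)"
    and walls: "\<forall>c\<in>Cs. wall m x c \<and> wall m y c"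
  shows "\<forall>i\<in>J. (F ^^ n) x i = (F ^^ n) y i"
proof (induction n)
  case (Suc n)
  show ?case
  proof
    fix i assume i: "i \<in> J"
    then consider c where "c \<in> Cs" "\<bar>i - c\<bar> \<le> int R" | "\<forall>j. \<bar>j - i\<bar> \<le> int radius \<longrightarrow> j \<in> J"
      using J by blast
    then show "(F ^^ Suc n) x i = (F ^^ Suc n) y i"
    proof cases
      case (1 c)
      then have "(F ^^ Suc n) x (c + (i - c)) = (F ^^ Suc n) e (i - c)"
        "(F ^^ Suc n) y (c + (i - c)) = (F ^^ Suc n) e (i - c)"
        using blk x y walls unfolding blocking_def by blast+
      then show ?thesis by simp
    next
      case 2
      then have "F ((F ^^ n) x) i = F ((F ^^ n) y) i"
        using has_radius_F funpow_mem[OF x] funpow_mem[OF y] Suc.IH unfolding has_radius_def by blast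
      then show ?thesis by simp
    qed
  qed
qed (use agree in simp)

lemma funpow_agree_between_walls:
  assumes "x \<in> X" "y \<in> X" "blocking m R" "radius \<le> R" "R \<le> m"
    and "wall m x c1" "wall m x c2" "wall m y c1" "wall m y c2"
    and agree: "\<And>j. c1 - int m \<le> j \<Longrightarrow> j \<le> c2 + int m \<Longrightarrow> x j = y j"
    and i: "c1 - int R \<le> i" "i \<le> c2 + int R"
  shows "(F ^^ n) x i = (F ^^ n) y i"
proof -
  let ?J = "{i. c1 - int R \<le> i \<and> i \<le> c2 + int R}"
  have "\<forall>i\<in>?J. (F ^^ n) x i = (F ^^ n) y i"
    by (rule funpow_agree_shielded[where Cs = "{c1, c2}"]) (use assms in auto)
  then show ?thesis using i by blast
qed

lemma funpow_agree_outside_walls: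
  assumes "x \<in> X" "y \<in> X" "blocking m R" "radius \<le> R" "R \<le> m"
    and "wall m x c1" "wall m x c2" "wall m y c1" "wall m y c2"
    and agree: "\<And>j. j \<le> c1 + int m \<or> c2 - int m \<le> j \<Longrightarrow> x j = y j"
    and i: "i \<le> c1 + int R \<or> c2 - int R \<le> i"
  shows "(F ^^ n) x i = (F ^^ n) y i"
proof -
  let ?J = "{i. i \<le> c1 + int R \<or> c2 - int R \<le> i}"
  have "\<forall>i\<in>?J. (F ^^ n) x i = (F ^^ n) y i"
    by (rule funpow_agree_shielded[where Cs = "{c1, c2}"]) (use assms in auto)
  then show ?thesis using i by blast
qed

lemma replace_between_walls:
  assumes blk: "blocking m R" and R: "radius \<le> R" "R \<le> m" and mem: "memory \<le> 2 * m + 1"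
    and a: "a \<in> X" and b: "b \<in> X" and c: "c1 \<le> c2"
    and wa: "wall m a c1" "wall m a c2" and wb: "wall m b c1" "wall m b c2"
    and eqT: "\<And>i. c1 - int R \<le> i \<Longrightarrow> i \<le> c2 + int R \<Longrightarrow> (F ^^ T) a i = (F ^^ T) b i"
    and x: "x \<in> X" and xa: "\<And>j. c1 - int m \<le> j \<Longrightarrow> j \<le> c2 + int m \<Longrightarrow> x j = a j"
  defines "x' \<equiv> \<lambda>j. if c1 - int m \<le> j \<and> j \<le> c2 + int m then b j else x j"
  shows "x' \<in> X \<and> (F ^^ T) x' = (F ^^ T) x"
proof
  have ab1: "a j = b j" if "c1 - int m \<le> j" "j \<le> c1 + int m" for j
  proof -
    have "\<bar>j - c1\<bar> \<le> int m" using that by arith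
    then have "a (c1 + (j - c1)) = e (j - c1)" "b (c1 + (j - c1)) = e (j - c1)"
      using wa(1) wb(1) unfolding wall_def by blast+
    then show ?thesis by simp
  qed
  have ab2: "a j = b j" if "c2 - int m \<le> j" "j \<le> c2 + int m" for j
  proof -
    have "\<bar>j - c2\<bar> \<le> int m" using that by arith
    then have "a (c2 + (j - c2)) = e (j - c2)" "b (c2 + (j - c2)) = e (j - c2)"
      using wa(2) wb(2) unfolding wall_def by blast+
    then show ?thesis by simp
  qed
  have wx: "wall m x c1" "wall m x c2" using wa xa c unfolding wall_def by auto
  have wx': "wall m x' c1" "wall m x' c2" using wb c unfolding wall_def x'_def by auto
  define y where "y = (\<lambda>j. if j < c1 - int m then x j else b j)"
  have y: "y \<in> X" unfolding y_def
  proof (rule glue_mem[OF x b])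
    fix j assume "c1 - int m \<le> j" "j < c1 - int m + int memory"
    then show "x j = b j" using mem c by (simp add: xa ab1)
  qed
  have "(\<lambda>j. if j < c2 - int m then y j else x j) \<in> X"
  proof (rule glue_mem[OF y x])
    fix j assume "c2 - int m \<le> j" "j < c2 - int m + int memory"
    then show "y j = x j" using mem c by (simp add: y_def xa ab2)
  qed
  moreover have "x' = (\<lambda>j. if j < c2 - int m then y j else x j)"
    using c by (auto simp: fun_eq_iff x'_def y_def xa ab2)
  ultimately show "x' \<in> X" by simp
  show "(F ^^ T) x' = (F ^^ T) x"
  proof
    fix i
    show "(F ^^ T) x' i = (F ^^ T) x i"
    proof (cases "c1 - int R \<le> i \<and> i \<le> c2 + int R")
      case True
      have "(F ^^ T) x i = (F ^^ T) a i"
        using funpow_agree_between_walls[OF x a blk R wx wa] xa True by blast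
      moreover have "(F ^^ T) x' i = (F ^^ T) b i"
        using funpow_agree_between_walls[OF _ b blk R wx' wb] True \<open>x' \<in> X\<close> by (simp add: x'_def)
      ultimately show ?thesis using eqT True by simp
    next
      case False
      then have i: "i \<le> c1 + int R \<or> c2 - int R \<le> i" by linarith
      have "x' j = x j" if "j \<le> c1 + int m \<or> c2 - int m \<le> j" for j
        using that c by (auto simp: x'_def xa ab1 ab2)
      from funpow_agree_outside_walls[OF \<open>x' \<in> X\<close> x blk R wx' wx this i] show ?thesis .
    qed
  qed
qed

lemma exchangeable_walled_segments:
  assumes blk: "blocking m R" and R: "radius \<le> R" "R \<le> m" and mem: "memory \<le> 2 * m + 1"
    and a: "a \<in> X" and b: "b \<in> X" and c: "c1 \<le> c2"
    and wa: "wall m a c1" "wall m a c2" and wb: "wall m b c1" "wall m b c2"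
    and eqT: "\<And>i. c1 - int R \<le> i \<Longrightarrow> i \<le> c2 + int R \<Longrightarrow> (F ^^ T) a i = (F ^^ T) b i"
  defines "len \<equiv> nat (c2 - c1 + 2 * int m + 1)"
  shows "exchangeable (F ^^ T) (window a (c1 - int m) len) (window b (c1 - int m) len)"
  unfolding exchangeable_def
proof (intro allI impI)
  fix x s assume x: "x \<in> X" and occ: "occurs_at (window a (c1 - int m) len) x s"
  define d where "d = s - (c1 - int m)"
  define a' where "a' = shift_by (- d) a"
  define b' where "b' = shift_by (- d) b"
  have len: "int len = c2 - c1 + 2 * int m + 1" using c by (simp add: len_def)
  have a': "a' \<in> X" "wall m a' (c1 + d)" "wall m a' (c2 + d)"
    using shift_by_mem[OF a] wa unfolding a'_def by (auto intro: wall_shift_by)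
  have b': "b' \<in> X" "wall m b' (c1 + d)" "wall m b' (c2 + d)"
    using shift_by_mem[OF b] wb unfolding b'_def by (auto intro: wall_shift_by)
  have eqT': "(F ^^ T) a' i = (F ^^ T) b' i" if "c1 + d - int R \<le> i" "i \<le> c2 + d + int R" for i
    using eqT[of "i - d"] that funpow_shift_by[OF a] funpow_shift_by[OF b]
    by (simp add: a'_def b'_def shift_by_apply)
  have xa': "x j = a' j" if "c1 + d - int m \<le> j" "j \<le> c2 + d + int m" for j
  proof -
    define k where "k = nat (j - s)"
    have k: "k < len" "j = s + int k" using that len unfolding k_def d_def by linarith+
    have "x (s + int k) = window a (c1 - int m) len ! k" using occ k(1) unfolding occurs_at_iff_nth by simp
    also have "\<dots> = a (c1 - int m + int k)" using k(1) by simp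
    also have "\<dots> = a' j" using k(2) by (simp add: a'_def d_def shift_by_apply ac_simps)
    finally show ?thesis using k(2) by simp
  qed
  have "replace x s (window b (c1 - int m) len) j =
      (if c1 + d - int m \<le> j \<and> j \<le> c2 + d + int m then b' j else x j)" for j
  proof (cases "c1 + d - int m \<le> j \<and> j \<le> c2 + d + int m")
    case True
    define k where "k = nat (j - s)"
    have k: "k < len" "j = s + int k" using True len unfolding k_def d_def by linarith+
    then show ?thesis using True by (simp add: replace_def b'_def d_def shift_by_apply ac_simps)
  next
    case False
    then have "\<not> (s \<le> j \<and> j < s + int len)" using len unfolding d_def by linarith
    then show ?thesis using False by (auto simp: replace_def)
  qed
  then have rep: "replace x s (window b (c1 - int m) len) =
      (\<lambda>j. if c1 + d - int m \<le> j \<and> j \<le> c2 + d + int m then b' j else x j)" ..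
  from replace_between_walls[OF blk R mem a'(1) b'(1) _ a'(2,3) b'(2,3) eqT' x xa'] c
  show "replace x s (window b (c1 - int m) len) \<in> X \<and>
      (F ^^ T) (replace x s (window b (c1 - int m) len)) = (F ^^ T) x"
    unfolding rep by simp
qed

lemma walled_segment_injective:
  assumes onto: "F ` X = X" and blk: "blocking m R" and R: "radius \<le> R" "R \<le> m"
    and mem: "memory \<le> 2 * m + 1" and a: "a \<in> X" and b: "b \<in> X" and c: "c1 \<le> c2"
    and wa: "wall m a c1" "wall m a c2" and wb: "wall m b c1" "wall m b c2"
    and eqT: "\<And>i. c1 - int R \<le> i \<Longrightarrow> i \<le> c2 + int R \<Longrightarrow> (F ^^ T) a i = (F ^^ T) b i"
    and i: "c1 - int m \<le> i" "i \<le> c2 + int m"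
  shows "a i = b i"
proof (rule ccontr)
  assume ne: "a i \<noteq> b i"
  define len where "len = nat (c2 - c1 + 2 * int m + 1)"
  define u where "u = window a (c1 - int m) len"
  define u' where "u' = window b (c1 - int m) len"
  have len: "int len = c2 - c1 + 2 * int m + 1" using c by (simp add: len_def)
  define k where "k = nat (i - (c1 - int m))"
  have k: "k < len" "i = c1 - int m + int k" using i len unfolding k_def by linarith+
  then have "u ! k \<noteq> u' ! k" using ne by (simp add: u_def u'_def)
  then have "u \<noteq> u'" by blast
  moreover have "memory \<le> length u" using mem len c unfolding u_def length_window by linarith
  moreover have "exchangeable (F ^^ T) u u'" "exchangeable (F ^^ T) u' u"
    unfolding u_def u'_def len_def
    using exchangeable_walled_segments[OF blk R mem a b c wa wb eqT]
      exchangeable_walled_segments[OF blk R mem b a c wb wa eqT[symmetric]] by simp_all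
  moreover have "u \<in> language X" "length u' = length u"
    unfolding u_def u'_def using window_in_language[OF a] by simp_all
  ultimately show False
    using no_mutually_exchangeable_words[OF funpow_surjective[OF onto] has_radius_funpow] by blast
qed

lemma wall_iff_occurs_at:
  "wall m x c \<longleftrightarrow> occurs_at (window e (- int m) (2 * m + 1)) x (c - int m)"
  unfolding wall_def occurs_at_iff_nth
proof (intro iffI allI impI)
  fix k assume w: "\<forall>j. \<bar>j\<bar> \<le> int m \<longrightarrow> x (c + j) = e j"
    and "k < length (window e (- int m) (2 * m + 1))"
  then have k: "k < 2 * m + 1" by simp
  then have "\<bar>int k - int m\<bar> \<le> int m" by arith
  then have "x (c + (int k - int m)) = e (int k - int m)" using w by blast
  then show "x (c - int m + int k) = window e (- int m) (2 * m + 1) ! k"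
    using k by (simp add: algebra_simps)
next
  fix j :: int
  assume occ: "\<forall>k<length (window e (- int m) (2 * m + 1)).
      x (c - int m + int k) = window e (- int m) (2 * m + 1) ! k" and j: "\<bar>j\<bar> \<le> int m"
  define k where "k = nat (j + int m)"
  have k: "k < 2 * m + 1" "j = - int m + int k" using j unfolding k_def by arith+
  then have "x (c - int m + int k) = e (- int m + int k)" using occ[rule_format, of k] by simp
  moreover have "c - int m + int k = c + j" "- int m + int k = j" using k(2) by simp_all
  ultimately show "x (c + j) = e j" by simp
qed

lemma periodic_funpow:
  assumes "x \<in> X" "\<forall>j. x (j + K) = x j"
  shows "\<forall>j. (F ^^ n) x (j + K) = (F ^^ n) x j"
proof -
  have "shift_by K x = x" using assms(2) by (simp add: fun_eq_iff shift_by_apply)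
  then have "shift_by K ((F ^^ n) x) = (F ^^ n) x" using funpow_shift_by[OF assms(1)] by metis
  then show ?thesis by (simp add: fun_eq_iff shift_by_apply)
qed

lemma finite_periodic_points:
  "0 < K \<Longrightarrow> finite {z \<in> X. \<forall>j. z (j + int K) = z j}"
  using finite_periodic_configurations by (rule finite_subset[rotated]) auto

lemma no_wall_after_orbit_enters_cycle:
  assumes no_walled_cycle: "\<not> (\<exists>p\<in>X. \<exists>Q\<ge>1. (F ^^ Q) p = p \<and> (\<exists>c. wall m p c))"
    and S: "finite S" "S \<subseteq> X" "\<forall>z\<in>S. F z \<in> S" and z: "z \<in> S"
  shows "\<not> wall m ((F ^^ card S) z) c"
proof
  assume wall: "wall m ((F ^^ card S) z) c"
  have "(F ^^ n) z \<in> S" for n by (induction n) (use S(3) z in auto)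
  then obtain Q where "1 \<le> Q" "(F ^^ Q) ((F ^^ card S) z) = (F ^^ card S) z"
    using finite_orbit_eventually_periodic[OF S(1)] by blast
  moreover have "(F ^^ card S) z \<in> X" using funpow_mem S(2) z by blast
  ultimately show False using no_walled_cycle wall by blast
qed

lemma walled_periodic_points_eq:
  assumes onto: "F ` X = X" and blk: "blocking m R" and R: "radius \<le> R" "R \<le> m"
    and mem: "memory \<le> 2 * m + 1" and K: "0 < K"
    and z: "z \<in> X" "\<forall>j. z (j + int K) = z j" "wall m z c"
    and z': "z' \<in> X" "\<forall>j. z' (j + int K) = z' j" "wall m z' c"
    and eq: "\<And>i. c - int R \<le> i \<Longrightarrow> i \<le> c + int K + int R \<Longrightarrow> (F ^^ T) z i = (F ^^ T) z' i"
  shows "z = z'"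
proof
  fix j
  have agree: "z i = z' i" if "c - int m \<le> i" "i \<le> c + int K + int m" for i
    using walled_segment_injective[OF onto blk R mem z(1) z'(1) _ z(3) wall_periodic[OF z(2,3)]
        z'(3) wall_periodic[OF z'(2,3)] eq] that by simp
  define r where "r = c + (j - c) mod int K"
  have r: "c \<le> r" "r < c + int K" using K by (simp_all add: r_def)
  have "r mod int K = j mod int K" by (simp add: r_def mod_add_right_eq)
  then have "z j = z r" "z' j = z' r"
    using periodic_eq_mod[of z K j] periodic_eq_mod[of z K r] periodic_eq_mod[of z' K j]
      periodic_eq_mod[of z' K r] z(2) z'(2) by simp_all
  then show "z j = z' j" using agree r by simp
qed

lemma words_encoded_by_walled_images:
  assumes onto: "F ` X = X" and blk: "blocking m R" and R: "radius \<le> R" "R \<le> m"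
    and mem: "memory \<le> 2 * m + 1"
    and no_walled_cycle: "\<not> (\<exists>p\<in>X. \<exists>Q\<ge>1. (F ^^ Q) p = p \<and> (\<exists>c. wall m p c))"
    and G: "\<And>P. P \<in> language X \<Longrightarrow> \<exists>z\<in>X. \<exists>g1\<le>G. \<exists>g2\<le>G.
      (\<forall>j. z (j + int (2 * m + 1 + g2 + length P + g1)) = z j) \<and>
      wall m z (int m) \<and> occurs_at P z (int (2 * m + 1 + g2))"
  shows "card (words L) \<le> card ({..G} \<times> {..G} \<times>
    avoiding (window e (- int m) (2 * m + 1)) (L + 2 * G + 2 * m + 2 * R + 2))"
proof -
  define W where "W = window e (- int m) (2 * m + 1)"
  define n where "n = L + 2 * G + 2 * m + 2 * R + 2"
  define period :: nat where "period = fact (2 * m + 1 + 2 * G + L)"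
  define S where "S = {z \<in> X. \<forall>j. z (j + int period) = z j}"
  have S: "finite S" "S \<subseteq> X" "\<forall>z\<in>S. F z \<in> S"
    using finite_periodic_points[of period] periodic_funpow[of _ period 1] F_mem
    by (auto simp: S_def period_def)
  define good where "good = (\<lambda>P g1 g2 z. g1 \<le> G \<and> g2 \<le> G \<and> z \<in> S \<and> wall m z (int m) \<and>
    (\<forall>j. z (j + int (2 * m + 1 + g2 + L + g1)) = z j) \<and> occurs_at P z (int (2 * m + 1 + g2)))"
  have "\<exists>g1 g2 z. good P g1 g2 z" if P: "P \<in> words L" for P
  proof -
    obtain z g1 g2 where z: "z \<in> X" "g1 \<le> G" "g2 \<le> G" "\<forall>j. z (j + int (2 * m + 1 + g2 + L + g1)) = z j"
        "wall m z (int m)" "occurs_at P z (int (2 * m + 1 + g2))"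
      using G P unfolding words_def by force
    have "2 * m + 1 + g2 + L + g1 dvd period"
      unfolding period_def using z(2,3) by (intro dvd_fact) simp_all
    then have "z (j + int period) = z j" for j
      using periodic_add_multiple[of z "2 * m + 1 + g2 + L + g1"] z(4) by blast
    then have "z \<in> S" using z(1) by (simp add: S_def)
    then show ?thesis using z unfolding good_def by blast
  qed
  then obtain g1 g2 h where h: "\<And>P. P \<in> words L \<Longrightarrow> good P (g1 P) (g2 P) (h P)" by metis
  define \<Phi> where "\<Phi> = (\<lambda>P. (g1 P, g2 P, window ((F ^^ card S) (h P)) (int m - int R) n))"
  have image: "\<Phi> P \<in> {..G} \<times> {..G} \<times> avoiding W n" if P: "P \<in> words L" for P
  proof -
    have z: "h P \<in> S" "g1 P \<le> G" "g2 P \<le> G" using h[OF P] by (simp_all add: good_def)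
    have "\<not> factor_at W (window ((F ^^ card S) (h P)) (int m - int R) n) k" for k
    proof
      assume "factor_at W (window ((F ^^ card S) (h P)) (int m - int R) n) k"
      then have "occurs_at W ((F ^^ card S) (h P)) (int m - int R + int k)" by (rule factor_at_window)
      then have "wall m ((F ^^ card S) (h P)) (int m - int R + int k + int m)"
        unfolding wall_iff_occurs_at W_def[symmetric] by (simp add: algebra_simps)
      then show False using no_wall_after_orbit_enters_cycle[OF no_walled_cycle S z(1)] by blast
    qed
    moreover have "window ((F ^^ card S) (h P)) (int m - int R) n \<in> words n"
      using S(2) z(1) funpow_mem window_in_words by blast
    ultimately show ?thesis using z(2,3) by (simp add: \<Phi>_def avoiding_def)
  qed
  have "inj_on \<Phi> (words L)"
  proof (rule inj_onI)
    fix P P' assume P: "P \<in> words L" and P': "P' \<in> words L" and eq: "\<Phi> P = \<Phi> P'"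
    define K where "K = 2 * m + 1 + g2 P + L + g1 P"
    have g: "g1 P' = g1 P" "g2 P' = g2 P" using eq by (simp_all add: \<Phi>_def)
    have z: "h P \<in> X" "\<forall>j. h P (j + int K) = h P j" "wall m (h P) (int m)"
        "occurs_at P (h P) (int (2 * m + 1 + g2 P))" "g1 P \<le> G" "g2 P \<le> G"
      using h[OF P] S(2) by (auto simp: good_def K_def)
    have z': "h P' \<in> X" "\<forall>j. h P' (j + int K) = h P' j" "wall m (h P') (int m)"
        "occurs_at P' (h P') (int (2 * m + 1 + g2 P))"
      using h[OF P'] S(2) g by (auto simp: good_def K_def)
    have eqT: "(F ^^ card S) (h P) i = (F ^^ card S) (h P') i"
      if "int m - int R \<le> i" "i \<le> int m + int K + int R" for i
    proof -
      define k where "k = nat (i - (int m - int R))"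
      have k: "k < n" "i = int m - int R + int k" using that z(5,6) unfolding k_def K_def n_def by linarith+
      then show ?thesis using eq nth_window[OF k(1)] by (simp add: \<Phi>_def) (metis nth_window)
    qed
    have "h P = h P'"
      using walled_periodic_points_eq[OF onto blk R mem _ z(1,2,3) z'(1,2,3) eqT] by (simp add: K_def)
    then show "P = P'" using z(4) z'(4) P P' by (simp add: occurs_at_iff_window words_def)
  qed
  moreover have "\<Phi> ` words L \<subseteq> {..G} \<times> {..G} \<times> avoiding W n" using image by (rule image_subsetI)
  moreover have "finite ({..G} \<times> {..G} \<times> avoiding W n)" by (simp add: finite_avoiding)
  ultimately show ?thesis unfolding W_def n_def by (rule card_inj_on_le)
qed

lemma ex_periodic_walled_point:
  assumes onto: "F ` X = X" and blk: "blocking m R" and R: "radius \<le> R" "R \<le> m"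
    and mem: "memory \<le> 2 * m + 1"
  shows "\<exists>p\<in>X. \<exists>Q\<ge>1. (F ^^ Q) p = p \<and> (\<exists>c. wall m p c)"
proof (rule ccontr)
  assume no_walled_cycle: "\<not> ?thesis"
  define W where "W = window e (- int m) (2 * m + 1)"
  have W: "W \<in> language X" "memory \<le> length W"
    using window_in_language[OF e_mem] mem by (simp_all add: W_def)
  obtain G where G: "\<And>P. P \<in> language X \<Longrightarrow> \<exists>z\<in>X. \<exists>g1\<le>G. \<exists>g2\<le>G.
      (\<forall>j. z (j + int (length W + g2 + length P + g1)) = z j) \<and>
      occurs_at W z 0 \<and> occurs_at P z (int (length W + g2))"
    by (rule periodic_point_through_word[OF W]) blast
  have "occurs_at W z 0 \<longleftrightarrow> wall m z (int m)" for z by (simp add: wall_iff_occurs_at W_def)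
  then have G': "\<And>P. P \<in> language X \<Longrightarrow> \<exists>z\<in>X. \<exists>g1\<le>G. \<exists>g2\<le>G.
      (\<forall>j. z (j + int (2 * m + 1 + g2 + length P + g1)) = z j) \<and>
      wall m z (int m) \<and> occurs_at P z (int (2 * m + 1 + g2))"
    using G by (simp add: W_def)
  obtain C D where CD: "\<And>n. card (avoiding W n) * (n + 1) \<le> card (words (n + D)) * C"
    by (rule card_avoiding_le[OF W]) blast
  define E where "E = 2 * G + 2 * m + 2 * R + 2 + D"
  define L where "L = (G + 1) * (G + 1) * C * CARD('a) ^ E"
  define n where "n = L + 2 * G + 2 * m + 2 * R + 2"
  have "card (words L) * (n + 1) \<le> card ({..G} \<times> {..G} \<times> avoiding W n) * (n + 1)"
    using words_encoded_by_walled_images[OF onto blk R mem no_walled_cycle G']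
    unfolding W_def n_def by (rule mult_le_mono1)
  also have "\<dots> = (G + 1) * (G + 1) * (card (avoiding W n) * (n + 1))"
    by (simp only: card_cartesian_product card_atMost Suc_eq_plus1 mult.assoc)
  also have "\<dots> \<le> (G + 1) * (G + 1) * (card (words (L + E)) * C)"
  proof -
    have "n + D = L + E" by (simp add: n_def E_def)
    then show ?thesis using CD[of n] by (intro mult_le_mono2) simp
  qed
  also have "\<dots> \<le> (G + 1) * (G + 1) * (card (words L) * CARD('a) ^ E * C)"
    using card_words_add_le[of L E] by (intro mult_le_mono2 mult_le_mono1)
  also have "\<dots> = card (words L) * L"
  proof -
    have "(G + 1) * (G + 1) * (k * CARD('a) ^ E * C) = k * ((G + 1) * (G + 1) * C * CARD('a) ^ E)"
      for k :: nat by (simp only: mult_ac)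
    then show ?thesis unfolding L_def[symmetric] .
  qed
  finally have "card (words L) * (n + 1) \<le> card (words L) * L" .
  moreover have "card (words L) * L < card (words L) * (n + 1)"
    using card_words_pos e_mem by (intro mult_strict_left_mono) (auto simp: n_def)
  ultimately show False by linarith
qed

lemma ex_wall_preserving_period:
  assumes onto: "F ` X = X" and blk: "blocking m2 m1" and "radius \<le> m1" "m1 \<le> m2"
    and "memory \<le> 2 * m2 + 1"
  obtains Q where "1 \<le> Q" "\<And>z c n. z \<in> X \<Longrightarrow> wall m2 z c \<Longrightarrow> wall m1 ((F ^^ (Q * n)) z) c"
proof -
  obtain p Q c where p: "p \<in> X" "1 \<le> Q" "(F ^^ Q) p = p" "wall m2 p c"
    using ex_periodic_walled_point[OF onto blk assms(3-5)] by blast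
  have "(F ^^ (Q * n)) p = p" for n using p(3) by (induction n) (simp_all add: funpow_add)
  moreover have "(F ^^ (Q * n)) p (c + j) = (F ^^ (Q * n)) e j" if "\<bar>j\<bar> \<le> int m1" for n j
    using blk p(1,4) that unfolding blocking_def by blast
  moreover have "p (c + j) = e j" if "\<bar>j\<bar> \<le> int m1" for j
    using p(4) that assms(4) unfolding wall_def by simp
  ultimately have core: "(F ^^ (Q * n)) e j = e j" if "\<bar>j\<bar> \<le> int m1" for n j
    using that by metis
  have "wall m1 ((F ^^ (Q * n)) z) c" if "z \<in> X" "wall m2 z c" for z c n
    using blk that core unfolding blocking_def wall_def by simp
  then show ?thesis using p(2) that by blast
qed

lemma periodic_walled_point_near:
  assumes x: "x \<in> X" and mem: "memory \<le> 2 * m + 1"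
  obtains z K c where "z \<in> X" "0 < K" "\<forall>j. z (j + int K) = z j" "wall m z c"
    "\<And>j. nat \<bar>j\<bar> \<le> N \<Longrightarrow> z j = x j"
proof -
  define W where "W = window e (- int m) (2 * m + 1)"
  define P where "P = window x (- int N) (2 * N + 1)"
  have W: "W \<in> language X" "memory \<le> length W"
    using window_in_language[OF e_mem] mem by (simp_all add: W_def)
  obtain G where G: "\<And>P. P \<in> language X \<Longrightarrow> \<exists>z\<in>X. \<exists>g1\<le>G. \<exists>g2\<le>G.
      (\<forall>j. z (j + int (length W + g2 + length P + g1)) = z j) \<and>
      occurs_at W z 0 \<and> occurs_at P z (int (length W + g2))"
    by (rule periodic_point_through_word[OF W]) blast
  obtain y g1 g2 where y: "y \<in> X" "\<forall>j. y (j + int (length W + g2 + length P + g1)) = y j"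
      "occurs_at W y 0" "occurs_at P y (int (length W + g2))"
    using G[OF window_in_language[OF x, of "- int N" "2 * N + 1"]] unfolding P_def by blast
  define K where "K = length W + g2 + length P + g1"
  define d where "d = int (length W + g2) + int N"
  define z where "z = shift_by d y"
  have "z \<in> X" unfolding z_def by (rule shift_by_mem[OF y(1)])
  moreover have "0 < K" using W(2) memory_pos unfolding K_def by linarith
  moreover have "\<forall>j. z (j + int K) = z j"
  proof
    fix j
    have "y ((j + d) + int K) = y (j + d)" using y(2) unfolding K_def by blast
    then show "z (j + int K) = z j" by (simp add: z_def shift_by_apply ac_simps)
  qed
  moreover have "wall m z (int m - d)"
    using y(3) unfolding z_def W_def by (intro wall_shift_by) (simp add: wall_iff_occurs_at)
  moreover have "z j = x j" if "nat \<bar>j\<bar> \<le> N" for j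
  proof -
    define k where "k = nat (j + int N)"
    have k: "k < length P" "j = - int N + int k" using that unfolding k_def P_def by auto
    then have "y (int (length W + g2) + int k) = P ! k" using y(4) unfolding occurs_at_iff_nth by blast
    then show ?thesis using k by (simp add: z_def d_def shift_by_apply P_def ac_simps)
  qed
  ultimately show ?thesis using that by blast
qed

lemma dense_periodic_if_surjective:
  assumes onto: "F ` X = X"
  shows "cdense_in (periodic_points X F) X"
  unfolding cdense_in_def
proof (intro conjI ballI allI impI)
  show "periodic_points X F \<subseteq> X" by (auto simp: periodic_points_def)
  fix x :: "int \<Rightarrow> 'a" and \<epsilon> :: real assume x: "x \<in> X" and \<epsilon>: "0 < \<epsilon>"
  obtain m1 where m1: "max radius memory \<le> m1" "blocking m1 (max radius memory)"
    using ex_blocking by blast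
  obtain m2 where m2: "m1 \<le> m2" "blocking m2 m1" using ex_blocking by blast
  have R: "radius \<le> max radius memory" "memory \<le> 2 * m1 + 1" "memory \<le> 2 * m2 + 1"
    using m1(1) m2(1) by auto
  have "radius \<le> m1" using m1(1) by simp
  obtain Q where Q: "1 \<le> Q" "\<And>z c n. z \<in> X \<Longrightarrow> wall m2 z c \<Longrightarrow> wall m1 ((F ^^ (Q * n)) z) c"
    by (rule ex_wall_preserving_period[OF onto m2(2) \<open>radius \<le> m1\<close> m2(1) R(3)]) blast
  obtain N where N: "(1/2) ^ N < \<epsilon>" using ex_half_power_less \<epsilon> by blast
  obtain z K c where z: "z \<in> X" "0 < K" "\<forall>j. z (j + int K) = z j" "wall m2 z c"
      "\<And>j. nat \<bar>j\<bar> \<le> N \<Longrightarrow> z j = x j"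
    by (rule periodic_walled_point_near[OF x R(3)]) blast
  define Y where "Y = {a \<in> X. (\<forall>j. a (j + int K) = a j) \<and> wall m1 a c}"
  have "finite Y" using finite_periodic_points[OF z(2)] by (rule finite_subset[rotated]) (auto simp: Y_def)
  moreover have "((F ^^ Q) ^^ n) z \<in> Y" for n
    using funpow_mem[OF z(1)] periodic_funpow[OF z(1,3)] Q(2)[OF z(1,4)]
    by (simp add: Y_def funpow_mult)
  moreover have "inj_on (F ^^ Q) Y"
  proof (rule inj_onI)
    fix a b assume "a \<in> Y" "b \<in> Y" "(F ^^ Q) a = (F ^^ Q) b"
    then show "a = b"
      using walled_periodic_points_eq[OF onto m1(2) R(1) m1(1) R(2) z(2), of a c b Q]
      by (simp add: Y_def)
  qed
  ultimately obtain d where "1 \<le> d" "((F ^^ Q) ^^ d) z = z" by (rule funpow_periodic_if_inj_on)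
  then have "z \<in> periodic_points X F"
    using z(1) Q(1) by (auto simp: periodic_points_def funpow_mult intro!: exI[of _ "Q * d"])
  moreover have "cdist x z < (1/2) ^ N" unfolding cdist_less_half_power_iff using z(5) by simp
  then have "cdist x z < \<epsilon>" using N by linarith
  ultimately show "\<exists>y\<in>periodic_points X F. cdist x y < \<epsilon>" by blast
qed

end

theorem mainTheorem1:
  fixes X :: "(int \<Rightarrow> 'a::finite) set"
    and F :: "(int \<Rightarrow> 'a) \<Rightarrow> (int \<Rightarrow> 'a)"
  assumes "transitive_subshift X"
    and "SFT X"
    and "cellular_automaton X F"
    and "\<exists>x. equicontinuity_point X F x"
  shows "F ` X = X \<longleftrightarrow> cdense_in (periodic_points X F) X"
proof -
  obtain e where e: "equicontinuity_point X F e" using assms(4) by blast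
  interpret sft_automaton_eq_point X F e
  proof unfold_locales
    show "transitive_subshift X" "SFT X" "cellular_automaton X F" by (fact assms(1,2,3))+
    show "equicontinuity_point X F e" by (fact e)
  qed
  show ?thesis using surjective_if_periodic_dense dense_periodic_if_surjective by blast
qed

end
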